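(* Let $(\mathcal G,(\cdot,\cdot),\mathcal H)$ be a generalized reductive Lie algebra and fix $i$, with $\mathcal V_i$, $\bar{\mathcal V}_i$ and $(\cdot,\cdot)_i$ as in the context. Then (i) the symmetric bilinear form $(\cdot,\cdot)_i$ on $\bar{\mathcal V}_i$ is positive definite; (ii) the symmetric bilinear form $(\cdot,\cdot)_i$ on $\mathcal V_i$ is positive semidefinite.
   Context: GRLA: $\mathcal G$ complex Lie algebra, $\mathcal H$ subalgebra, $(\cdot,\cdot)$ bilinear form with (GR1) form symmetric, nondegenerate, invariant; (GR2) $\mathcal H$ nontrivial finite-dimensional abelian, self-centralizing, $\mathrm{ad}(h)$ diagonalizable; root spaces $\mathcal G_\alpha$, root system $R=\{\alpha\in\mathcal H^*:\mathcal G_\alpha\ne0\}$; $t_\alpha\in\mathcal H$ with $(t_\alpha,h)=\alpha(h)$, $(\alpha,\beta):=(t_\alpha,t_\beta)$; $R^\times=\{\alpha\in R:(\alpha,\alpha)\neq0\}$, $R^0=R\setminus R^\times$; (GR3) $\mathrm{ad}(x)$ locally nilpotent for $x\in\mathcal G_\alpha$, $\alpha\in R^\times$; (GR4) $R$ discrete; (GR5) $R^\times\ne\emptyset$. Partition $R^\times=\bigcup_iR_i^\times$ into the classes of the equivalence relation: $\alpha\sim\beta$ iff there is a chain $\alpha=\alpha_0,\dots,\alpha_t=\beta$ in $R^\times$ with $(\alpha_s,\alpha_{s+1})\ne0$. Let $\mathcal V$ be the real span of $R$, $\mathcal V_i$ the real span of $R_i^\times$, $\mathcal V^0=\{v\in\mathcal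 V:(v,\mathcal V)=0\}$, $\bar{\ }:\mathcal V\to\mathcal V/\mathcal V^0$, and $\bar{\mathcal V}_i$ the image of $\mathcal V_i$. Let $c_i\in\mathbb C\setminus\{0\}$ be such that $(\cdot,\cdot)_i:=c_i(\cdot,\cdot)$ is real valued on $\mathcal V_i$ and $(\gamma,\gamma)_i>0$ for some $\gamma\in R_i^\times$ (such $c_i$ exist). On $\bar{\mathcal V}_i$ set $(\bar\alpha,\bar\beta)_i:=(\alpha,\beta)_i$, which is well defined. *)

theory Defs
  imports Complex_Main
begin

definition lie_algebra ::
  "(complex \<Rightarrow> 'g::ab_group_add \<Rightarrow> 'g) \<Rightarrow> ('g \<Rightarrow> 'g \<Rightarrow> 'g) \<Rightarrow> bool" where
  "lie_algebra sc br \<longleftrightarrow>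
     vector_space sc \<and>
     (\<forall>a x y z. br (sc a x + y) z = sc a (br x z) + br y z) \<and>
     (\<forall>a x y z. br z (sc a x + y) = sc a (br z x) + br z y) \<and>
     (\<forall>x. br x x = 0) \<and>
     (\<forall>x y z. br x (br y z) + br y (br z x) + br z (br x y) = 0)"

text \<open>Elements of H^*: complex-linear functionals on H, normalised to be 0 off H.\<close>
definition dual_elem ::
  "(complex \<Rightarrow> 'g::ab_group_add \<Rightarrow> 'g) \<Rightarrow> 'g set \<Rightarrow> ('g \<Rightarrow> complex) \<Rightarrow> bool" where
  "dual_elem sc H \<alpha> \<longleftrightarrow>
     (\<forall>h1\<in>H. \<forall>h2\<in>H. \<forall>a. \<alpha> (sc a h1 + h2) = a * \<alpha> h1 + \<alpha> h2) \<and>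
     (\<forall>x. x \<notin> H \<longrightarrow> \<alpha> x = 0)"

definition root_space ::
  "(complex \<Rightarrow> 'g::ab_group_add \<Rightarrow> 'g) \<Rightarrow> ('g \<Rightarrow> 'g \<Rightarrow> 'g) \<Rightarrow> 'g set \<Rightarrow> ('g \<Rightarrow> complex) \<Rightarrow> 'g set" where
  "root_space sc br H \<alpha> = {x. \<forall>h\<in>H. br h x = sc (\<alpha> h) x}"

definition roots ::
  "(complex \<Rightarrow> 'g::ab_group_add \<Rightarrow> 'g) \<Rightarrow> ('g \<Rightarrow> 'g \<Rightarrow> 'g) \<Rightarrow> 'g set \<Rightarrow> ('g \<Rightarrow> complex) set" where
  "roots sc br H = {\<alpha>. dual_elem sc H \<alpha> \<and> root_space sc br H \<alpha> \<noteq> {0}}"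

definition tvec :: "('g \<Rightarrow> 'g \<Rightarrow> complex) \<Rightarrow> 'g set \<Rightarrow> ('g \<Rightarrow> complex) \<Rightarrow> 'g" where
  "tvec B H \<alpha> = (THE t. t \<in> H \<and> (\<forall>h\<in>H. B t h = \<alpha> h))"

definition rform :: "('g \<Rightarrow> 'g \<Rightarrow> complex) \<Rightarrow> 'g set \<Rightarrow> ('g \<Rightarrow> complex) \<Rightarrow> ('g \<Rightarrow> complex) \<Rightarrow> complex" where
  "rform B H \<alpha> \<beta> = B (tvec B H \<alpha>) (tvec B H \<beta>)"

definition nonisotropic_roots ::
  "(complex \<Rightarrow> 'g::ab_group_add \<Rightarrow> 'g) \<Rightarrow> ('g \<Rightarrow> 'g \<Rightarrow> 'g) \<Rightarrow> ('g \<Rightarrow> 'g \<Rightarrow> complex) \<Rightarrow> 'g set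
    \<Rightarrow> ('g \<Rightarrow> complex) set" where
  "nonisotropic_roots sc br B H = {\<alpha> \<in> roots sc br H. rform B H \<alpha> \<alpha> \<noteq> 0}"

definition grla ::
  "(complex \<Rightarrow> 'g::ab_group_add \<Rightarrow> 'g) \<Rightarrow> ('g \<Rightarrow> 'g \<Rightarrow> 'g) \<Rightarrow> ('g \<Rightarrow> 'g \<Rightarrow> complex) \<Rightarrow> 'g set \<Rightarrow> bool" where
  "grla sc br B H \<longleftrightarrow>
     lie_algebra sc br \<and>
     \<comment> \<open>H is a subalgebra\<close>
     module.subspace sc H \<and> (\<forall>h\<in>H. \<forall>k\<in>H. br h k \<in> H) \<and>
     \<comment> \<open>(GR1) B symmetric, bilinear, nondegenerate, invariant\<close>
     (\<forall>x y. B x y = B y x) \<and>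
     (\<forall>a x y z. B (sc a x + y) z = a * B x z + B y z) \<and>
     (\<forall>x. (\<forall>y. B x y = 0) \<longrightarrow> x = 0) \<and>
     (\<forall>x y z. B (br x y) z = B x (br y z)) \<and>
     \<comment> \<open>(GR2) H nontrivial, finite-dimensional, abelian, self-centralizing, ad H diagonalizable\<close>
     H \<noteq> {0} \<and>
     (\<exists>S. finite S \<and> S \<subseteq> H \<and> module.span sc S = H) \<and>
     (\<forall>h\<in>H. \<forall>k\<in>H. br h k = 0) \<and>
     {x. \<forall>h\<in>H. br h x = 0} = H \<and>
     (\<forall>x. \<exists>F f. finite F \<and> F \<subseteq> {\<alpha>. dual_elem sc H \<alpha>} \<and>
                 (\<forall>\<alpha>\<in>F. f \<alpha> \<in> root_space sc br H \<alpha>) \<and> x = sum f F) \<and>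
     \<comment> \<open>(GR3) ad x locally nilpotent for root vectors of nonisotropic roots\<close>
     (\<forall>\<alpha>\<in>nonisotropic_roots sc br B H. \<forall>x\<in>root_space sc br H \<alpha>.
         \<forall>y. \<exists>n. (br x ^^ n) y = 0) \<and>
     \<comment> \<open>(GR4) R discrete in H^* (the topology of pointwise convergence on H,
         which coincides with the norm topology since H is finite-dimensional)\<close>
     (\<forall>\<alpha>\<in>roots sc br H. \<exists>F e. finite F \<and> F \<subseteq> H \<and> e > 0 \<and>
         (\<forall>\<beta>\<in>roots sc br H. (\<forall>h\<in>F. cmod (\<beta> h - \<alpha> h) < e) \<longrightarrow> \<beta> = \<alpha>)) \<and>
     \<comment> \<open>(GR5)\<close>
     nonisotropic_roots sc br B H \<noteq> {}"

definition real_span :: "('g \<Rightarrow> complex) set \<Rightarrow> ('g \<Rightarrow> complex) set" where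
  "real_span S = {(\<lambda>x. \<Sum>\<beta>\<in>F. complex_of_real (c \<beta>) * \<beta> x) | F c. finite F \<and> F \<subseteq> S}"

text \<open>The equivalence class R_i^x of a nonisotropic root alpha0 (connectedness
via chains of non-orthogonal nonisotropic roots).\<close>
definition root_class ::
  "(complex \<Rightarrow> 'g::ab_group_add \<Rightarrow> 'g) \<Rightarrow> ('g \<Rightarrow> 'g \<Rightarrow> 'g) \<Rightarrow> ('g \<Rightarrow> 'g \<Rightarrow> complex) \<Rightarrow> 'g set
    \<Rightarrow> ('g \<Rightarrow> complex) \<Rightarrow> ('g \<Rightarrow> complex) set" where
  "root_class sc br B H \<alpha>0 =
     {\<beta> \<in> nonisotropic_roots sc br B H.
        (\<lambda>a b. a \<in> nonisotropic_roots sc br B H \<and> b \<in> nonisotropic_roots sc br B H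
               \<and> rform B H a b \<noteq> 0)\<^sup>*\<^sup>* \<alpha>0 \<beta>}"

definition radical ::
  "(complex \<Rightarrow> 'g::ab_group_add \<Rightarrow> 'g) \<Rightarrow> ('g \<Rightarrow> 'g \<Rightarrow> 'g) \<Rightarrow> ('g \<Rightarrow> 'g \<Rightarrow> complex) \<Rightarrow> 'g set
    \<Rightarrow> ('g \<Rightarrow> complex) set" where
  "radical sc br B H = {v \<in> real_span (roots sc br H).
      \<forall>w\<in>real_span (roots sc br H). rform B H v w = 0}"

end

theory Submission
  imports Defs "HOL-Library.Multiset"
begin

text \<open>
  For a nonisotropic root \<open>\<alpha>\<close> and any root \<open>\<beta>\<close>, \<open>sl\<^sub>2\<close>-theory (with the local
  nilpotency of root vectors) shows that the Cartan number \<open>2(\<beta>,\<alpha>)/(\<alpha>,\<alpha>)\<close> is an integer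
  and that the \<open>\<alpha>\<close>-string through \<open>\<beta>\<close> is unbroken. Playing reflections and strings against
  each other, without any positivity, the two Cartan numbers of a pair of nonisotropic roots
  have equal signs and product at most \<open>4\<close>, and every Cartan number \<open>2(u,\<gamma>)/(\<gamma>,\<gamma>)\<close> has
  absolute value at most \<open>4\<close>. Hence \<open>(\<beta>,\<beta>)\<^sub>i > 0\<close> on the class and
  \<open>|(u,\<gamma>)\<^sub>i| \<le> 2(\<gamma>,\<gamma>)\<^sub>i\<close> for all roots \<open>u\<close>.

  An integer combination of roots of the class is the sum \<open>s\<close> of a multiset of such roots. If
  two summands \<open>x, y\<close> are obtuse, then \<open>x + y\<close> is a root; either it lies in the class again, or
  it is isotropic, and then the product of the reflections in \<open>x\<close> and \<open>y\<close> translates every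
  root along \<open>x + y\<close>, so boundedness of Cartan numbers makes \<open>x + y\<close> orthogonal to all roots.
  Merging or dropping such pairs ends with a multiset of pairwise acute roots, for which
  \<open>(s,s)\<^sub>i\<close> is at least the sum of the squares; thus \<open>(s,s)\<^sub>i \<ge> 0\<close> and \<open>|(\<delta>,s)\<^sub>i| \<le> 2(s,s)\<^sub>i\<close>
  for every root \<open>\<delta>\<close>. Scaling and rounding carries both facts to real coefficients: the form is
  positive semidefinite on \<open>\<V>\<^sub>i\<close>, and a vector of square zero is orthogonal to all roots,
  i.e. lies in the radical.
\<close>

lemma last_nonzero_iterate:
  fixes f :: "'a::zero \<Rightarrow> 'a"
  assumes "(f ^^ n) y = 0" "y \<noteq> 0"
  obtains m where "\<forall>j\<le>m. (f ^^ j) y \<noteq> 0" "(f ^^ Suc m) y = 0"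
proof -
  define n0 where "n0 = (LEAST n. (f ^^ n) y = 0)"
  have zero: "(f ^^ n0) y = 0"
    unfolding n0_def by (rule LeastI[of _ n]) (rule assms(1))
  have nonzero: "(f ^^ j) y \<noteq> 0" if "j < n0" for j
    using that not_less_Least unfolding n0_def by blast
  obtain m where m: "n0 = Suc m"
    using zero assms(2) by (cases n0) auto
  show ?thesis
  proof (rule that)
    show "\<forall>j\<le>m. (f ^^ j) y \<noteq> 0"
      using nonzero m by simp
    show "(f ^^ Suc m) y = 0"
      using zero m by simp
  qed
qed

lemma bounded_progression_step_zero:
  fixes p s :: "'a::real_normed_vector"
  assumes bounded: "\<And>k::nat. norm (p - real k *\<^sub>R s) \<le> C"
  shows "s = 0"
proof (rule ccontr)
  assume "s \<noteq> 0"
  then obtain k :: nat where "C + norm p < real k * norm s"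
    using ex_less_of_nat_mult[of "norm s" "C + norm p"] by auto
  moreover have "norm (real k *\<^sub>R s) \<le> norm p + norm (p - real k *\<^sub>R s)"
    using norm_triangle_ineq4[of p "p - real k *\<^sub>R s"] by simp
  ultimately show False
    using bounded[of k] by simp
qed

section \<open>Quadratic forms on coefficient vectors\<close>

definition gram_form :: "'a set \<Rightarrow> ('a \<Rightarrow> 'a \<Rightarrow> real) \<Rightarrow> ('a \<Rightarrow> real) \<Rightarrow> ('a \<Rightarrow> real) \<Rightarrow> real"
  where "gram_form F g u w = (\<Sum>\<beta>\<in>F. \<Sum>\<beta>'\<in>F. u \<beta> * w \<beta>' * g \<beta> \<beta>')"

lemma gram_form_lincomb_left:
  "gram_form F g (\<lambda>\<beta>. a * u \<beta> + b * v \<beta>) w = a * gram_form F g u w + b * gram_form F g v w"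
  unfolding gram_form_def by (simp add: sum.distrib sum_distrib_left algebra_simps)

lemma gram_form_lincomb_right:
  "gram_form F g w (\<lambda>\<beta>. a * u \<beta> + b * v \<beta>) = a * gram_form F g w u + b * gram_form F g w v"
  unfolding gram_form_def by (simp add: sum.distrib sum_distrib_left algebra_simps)

lemma gram_form_sym:
  assumes "\<And>\<beta> \<beta>'. g \<beta> \<beta>' = g \<beta>' \<beta>"
  shows "gram_form F g u w = gram_form F g w u"
  unfolding gram_form_def using assms by (subst sum.swap) (simp add: mult_ac)

lemma gram_form_diff_expand:
  "gram_form F g (\<lambda>\<beta>. t * r \<beta> - e \<beta>) (\<lambda>\<beta>. t * r \<beta> - e \<beta>)
     = t\<^sup>2 * gram_form F g r r - t * (gram_form F g r e + gram_form F g e r) + gram_form F g e e"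
proof -
  have "(\<lambda>\<beta>. t * r \<beta> - e \<beta>) = (\<lambda>\<beta>. t * r \<beta> + (- 1) * e \<beta>)"
    by simp
  then show ?thesis
    by (simp only: gram_form_lincomb_left gram_form_lincomb_right)
      (simp add: power2_eq_square algebra_simps)
qed

lemma gram_form_abs_le:
  assumes "\<forall>\<beta>\<in>F. \<bar>u \<beta>\<bar> \<le> a" and "\<forall>\<beta>\<in>F. \<bar>w \<beta>\<bar> \<le> b"
  shows "\<bar>gram_form F g u w\<bar> \<le> a * b * (\<Sum>\<beta>\<in>F. \<Sum>\<beta>'\<in>F. \<bar>g \<beta> \<beta>'\<bar>)"
proof -
  have "\<bar>gram_form F g u w\<bar> \<le> (\<Sum>\<beta>\<in>F. \<Sum>\<beta>'\<in>F. \<bar>u \<beta> * w \<beta>' * g \<beta> \<beta>'\<bar>)"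
    unfolding gram_form_def by (rule order_trans[OF sum_abs sum_mono[OF sum_abs]])
  also have "\<dots> \<le> (\<Sum>\<beta>\<in>F. \<Sum>\<beta>'\<in>F. a * b * \<bar>g \<beta> \<beta>'\<bar>)"
  proof (intro sum_mono)
    fix \<beta> \<beta>' assume "\<beta> \<in> F" "\<beta>' \<in> F"
    then have "\<bar>u \<beta>\<bar> * \<bar>w \<beta>'\<bar> \<le> a * b"
      using assms by (intro mult_mono) auto
    then show "\<bar>u \<beta> * w \<beta>' * g \<beta> \<beta>'\<bar> \<le> a * b * \<bar>g \<beta> \<beta>'\<bar>"
      by (simp add: abs_mult mult_right_mono)
  qed
  finally show ?thesis
    by (simp add: sum_distrib_left)
qed

text \<open>The next two lemmas compare \<open>r\<close> with the integer vector \<open>\<lfloor>t r\<rfloor> = t r - e\<close>, where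
  \<open>\<bar>e\<bar> \<le> 1\<close>, so that the form at \<open>\<lfloor>t r\<rfloor>\<close> is \<open>t\<^sup>2 q(r) + O(t)\<close>.\<close>

lemma gram_form_nonneg_if_nonneg_on_integers:
  assumes "finite F"
    and int: "\<And>k::'a \<Rightarrow> int. 0 \<le> gram_form F g (\<lambda>\<beta>. of_int (k \<beta>)) (\<lambda>\<beta>. of_int (k \<beta>))"
  shows "0 \<le> gram_form F g r r"
proof (rule ccontr)
  assume "\<not> 0 \<le> gram_form F g r r"
  then have neg: "gram_form F g r r < 0" by simp
  define G where "G = (\<Sum>\<beta>\<in>F. \<Sum>\<beta>'\<in>F. \<bar>g \<beta> \<beta>'\<bar>)"
  define a where "a = (\<Sum>\<beta>\<in>F. \<bar>r \<beta>\<bar>)"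
  have "G \<ge> 0" unfolding G_def by (auto intro: sum_nonneg)
  obtain n :: nat where "2 * a * G + G < real n * - gram_form F g r r"
    using ex_less_of_nat_mult[of "- gram_form F g r r"] neg by auto
  define t where "t = real (Suc n)"
  have "t \<ge> 1" and t_large: "t * gram_form F g r r + 2 * a * G + G < 0"
    using \<open>2 * a * G + G < real n * - gram_form F g r r\<close> neg unfolding t_def by (auto simp: algebra_simps)
  define e where "e \<beta> = t * r \<beta> - of_int \<lfloor>t * r \<beta>\<rfloor>" for \<beta>
  have "\<bar>e \<beta>\<bar> \<le> 1" for \<beta>
    unfolding e_def by linarith
  then have e: "\<forall>\<beta>\<in>F. \<bar>e \<beta>\<bar> \<le> 1"
    by blast
  have r: "\<forall>\<beta>\<in>F. \<bar>r \<beta>\<bar> \<le> a"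
    unfolding a_def using member_le_sum[of _ F "\<lambda>\<beta>. \<bar>r \<beta>\<bar>"] \<open>finite F\<close> by auto
  have "- (gram_form F g r e + gram_form F g e r) \<le> 2 * a * G" "gram_form F g e e \<le> G"
    using gram_form_abs_le[OF r e, of g] gram_form_abs_le[OF e r, of g] gram_form_abs_le[OF e e, of g]
    unfolding G_def by linarith+
  moreover have "G \<le> t * G"
    using \<open>t \<ge> 1\<close> \<open>G \<ge> 0\<close> mult_right_mono[of 1 t G] by simp
  ultimately have "t * - (gram_form F g r e + gram_form F g e r) + gram_form F g e e \<le> t * (2 * a * G) + t * G"
    using mult_left_mono[of "- (gram_form F g r e + gram_form F g e r)" "2 * a * G" t] \<open>t \<ge> 1\<close>
    by linarith
  moreover have "0 \<le> gram_form F g (\<lambda>\<beta>. t * r \<beta> - e \<beta>) (\<lambda>\<beta>. t * r \<beta> - e \<beta>)"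
    using int[of "\<lambda>\<beta>. \<lfloor>t * r \<beta>\<rfloor>"] by (simp add: e_def)
  ultimately have "0 \<le> t * (t * gram_form F g r r + 2 * a * G + G)"
    unfolding gram_form_diff_expand by (simp add: power2_eq_square algebra_simps)
  moreover have "t * (t * gram_form F g r r + 2 * a * G + G) < 0"
    using t_large \<open>t \<ge> 1\<close> by (intro mult_pos_neg) auto
  ultimately show False
    by linarith
qed

lemma gram_form_radical:
  assumes psd: "\<And>u. 0 \<le> gram_form F g u u"
    and sym: "\<And>\<beta> \<beta>'. g \<beta> \<beta>' = g \<beta>' \<beta>"
    and isotropic: "gram_form F g r r = 0"
  shows "gram_form F g r w = 0"
proof -
  define x where "x = gram_form F g r w"
  define Y where "Y = gram_form F g w w"
  have "Y \<ge> 0" unfolding Y_def by (rule psd)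
  have "gram_form F g w r = x"
    unfolding x_def by (rule gram_form_sym[OF sym])
  have quadratic: "0 \<le> 2 * s * x + s\<^sup>2 * Y" for s
  proof -
    have "0 \<le> gram_form F g (\<lambda>\<beta>. 1 * r \<beta> + s * w \<beta>) (\<lambda>\<beta>. 1 * r \<beta> + s * w \<beta>)"
      by (rule psd)
    also have "\<dots> = 2 * s * x + s\<^sup>2 * Y"
      by (simp only: gram_form_lincomb_left gram_form_lincomb_right)
        (simp add: isotropic \<open>gram_form F g w r = x\<close> flip: x_def Y_def,
         simp add: power2_eq_square algebra_simps)
    finally show ?thesis .
  qed
  show ?thesis
  proof (cases "Y = 0")
    case True
    then have "0 \<le> - 2 * x\<^sup>2"
      using quadratic[of "- x"] by (simp add: power2_eq_square)
    then show ?thesis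
      unfolding x_def by simp
  next
    case False
    then have "Y > 0" using \<open>Y \<ge> 0\<close> by simp
    have "0 \<le> 2 * (- x / Y) * x + (- x / Y)\<^sup>2 * Y"
      by (rule quadratic)
    also have "\<dots> = - (x\<^sup>2 / Y)"
      using \<open>Y > 0\<close> by (simp add: field_simps power2_eq_square)
    finally have "x\<^sup>2 \<le> 0"
      using \<open>Y > 0\<close> by (simp add: divide_le_0_iff)
    then show ?thesis
      unfolding x_def by simp
  qed
qed

lemma gram_radical_in_kernel:
  fixes p :: "'a \<Rightarrow> 'b::real_normed_vector"
  assumes "finite F"
    and bound: "\<And>k::'a \<Rightarrow> int. norm (\<Sum>\<beta>\<in>F. real_of_int (k \<beta>) *\<^sub>R p \<beta>)
                  \<le> K * gram_form F g (\<lambda>\<beta>. of_int (k \<beta>)) (\<lambda>\<beta>. of_int (k \<beta>))"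
    and radical: "\<And>w. gram_form F g r w = 0" "\<And>w. gram_form F g w r = 0"
  shows "(\<Sum>\<beta>\<in>F. r \<beta> *\<^sub>R p \<beta>) = 0"
proof (rule ccontr)
  define \<psi> where "\<psi> u = (\<Sum>\<beta>\<in>F. u \<beta> *\<^sub>R p \<beta>)" for u
  assume "(\<Sum>\<beta>\<in>F. r \<beta> *\<^sub>R p \<beta>) \<noteq> 0"
  then have "norm (\<psi> r) > 0"
    unfolding \<psi>_def by simp
  define G where "G = (\<Sum>\<beta>\<in>F. \<Sum>\<beta>'\<in>F. \<bar>g \<beta> \<beta>'\<bar>)"
  define P where "P = (\<Sum>\<beta>\<in>F. norm (p \<beta>))"
  obtain n :: nat where t_large: "\<bar>K\<bar> * G + P < real n * norm (\<psi> r)"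
    using ex_less_of_nat_mult[OF \<open>norm (\<psi> r) > 0\<close>] by blast
  define e where "e \<beta> = real n * r \<beta> - of_int \<lfloor>real n * r \<beta>\<rfloor>" for \<beta>
  have "\<bar>e \<beta>\<bar> \<le> 1" for \<beta>
    unfolding e_def by linarith
  then have e: "\<forall>\<beta>\<in>F. \<bar>e \<beta>\<bar> \<le> 1"
    by blast
  have "K * gram_form F g (\<lambda>\<beta>. real n * r \<beta> - e \<beta>) (\<lambda>\<beta>. real n * r \<beta> - e \<beta>) = K * gram_form F g e e"
    unfolding gram_form_diff_expand radical by simp
  also have "\<dots> \<le> \<bar>K\<bar> * \<bar>gram_form F g e e\<bar>"
    by (metis abs_ge_self abs_mult)
  also have "\<dots> \<le> \<bar>K\<bar> * G"
    using gram_form_abs_le[OF e e, of g] unfolding G_def by (simp add: mult_left_mono)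
  finally have k: "norm (\<psi> (\<lambda>\<beta>. real n * r \<beta> - e \<beta>)) \<le> \<bar>K\<bar> * G"
    using bound[of "\<lambda>\<beta>. \<lfloor>real n * r \<beta>\<rfloor>"] unfolding \<psi>_def by (simp add: e_def)
  have "norm (\<psi> e) \<le> P"
    unfolding \<psi>_def P_def
  proof (rule order_trans[OF norm_sum sum_mono])
    fix \<beta> assume "\<beta> \<in> F"
    then show "norm (e \<beta> *\<^sub>R p \<beta>) \<le> norm (p \<beta>)"
      using e by (simp add: mult_left_le_one_le)
  qed
  have "\<psi> (\<lambda>\<beta>. real n * r \<beta> - e \<beta>) + \<psi> e = real n *\<^sub>R \<psi> r"
    unfolding \<psi>_def by (simp add: scaleR_sum_right scaleR_diff_left sum_subtractf)
  then have "real n * norm (\<psi> r) = norm (\<psi> (\<lambda>\<beta>. real n * r \<beta> - e \<beta>) + \<psi> e)"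
    by simp
  also have "\<dots> \<le> \<bar>K\<bar> * G + P"
    using norm_triangle_ineq k \<open>norm (\<psi> e) \<le> P\<close> by (rule order_trans[OF _ add_mono])
  finally show False
    using t_large by simp
qed

definition msum :: "('a \<Rightarrow> 'b::comm_monoid_add) multiset \<Rightarrow> 'a \<Rightarrow> 'b"
  where "msum M = (\<lambda>x. \<Sum>f\<in>#M. f x)"

lemma msum_add_mset: "msum (add_mset f M) = (\<lambda>x. f x + msum M x)"
  by (simp add: msum_def)

lemma norm_sum_mset_le: "norm (\<Sum>x\<in>#M. f x) \<le> (\<Sum>x\<in>#M. norm (f x :: 'a::real_normed_vector))"
  by (induct M) (auto intro: order_trans[OF norm_triangle_ineq])

definition rcomb :: "('a \<Rightarrow> complex) set \<Rightarrow> (('a \<Rightarrow> complex) \<Rightarrow> real) \<Rightarrow> 'a \<Rightarrow> complex"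
  where "rcomb F r = (\<lambda>x. \<Sum>\<beta>\<in>F. complex_of_real (r \<beta>) * \<beta> x)"

lemma mem_real_span: "v \<in> real_span S \<longleftrightarrow> (\<exists>F r. finite F \<and> F \<subseteq> S \<and> v = rcomb F r)"
  unfolding real_span_def rcomb_def by blast

definition signed_mset :: "('a \<Rightarrow> complex) set \<Rightarrow> (('a \<Rightarrow> complex) \<Rightarrow> int) \<Rightarrow> ('a \<Rightarrow> complex) multiset"
  where "signed_mset F k = (\<Sum>\<beta>\<in>F. replicate_mset (nat \<bar>k \<beta>\<bar>) (if 0 \<le> k \<beta> then \<beta> else (\<lambda>x. - \<beta> x)))"

lemma msum_replicate_mset: "msum (replicate_mset n f) = (\<lambda>x. of_nat n * f x)"
  by (induct n) (simp_all add: msum_add_mset algebra_simps msum_def)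

lemma msum_union: "msum (M + N) = (\<lambda>x. msum M x + msum N x)"
  by (simp add: msum_def)

lemma msum_signed_mset:
  assumes "finite F"
  shows "msum (signed_mset F k) = rcomb F (\<lambda>\<beta>. of_int (k \<beta>))"
proof -
  have rep: "msum (replicate_mset (nat \<bar>k \<beta>\<bar>) (if 0 \<le> k \<beta> then \<beta> else (\<lambda>x. - \<beta> x)))
      = (\<lambda>x. of_int (k \<beta>) * \<beta> x)" for \<beta>
    by (auto simp: msum_replicate_mset of_nat_nat)
  show ?thesis
    unfolding signed_mset_def rcomb_def using assms
    by (induct F rule: finite_induct) (simp_all add: msum_union msum_def[of "{#}"] rep)
qed

lemma set_signed_mset:
  assumes "finite F"
  shows "set_mset (signed_mset F k) \<subseteq> F \<union> (\<lambda>\<beta> x. - \<beta> x) ` F"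
  using assms unfolding signed_mset_def by (induct F rule: finite_induct) auto

locale gr_lie_algebra =
  fixes sc :: "complex \<Rightarrow> 'g::ab_group_add \<Rightarrow> 'g"
    and br :: "'g \<Rightarrow> 'g \<Rightarrow> 'g"
    and B :: "'g \<Rightarrow> 'g \<Rightarrow> complex"
    and H :: "'g set"
  assumes grla: "grla sc br B H"
begin

sublocale V: vector_space sc
  using grla by (simp add: grla_def lie_algebra_def)

abbreviation "rspace \<equiv> root_space sc br H"
abbreviation "R \<equiv> roots sc br H"
abbreviation "Rx \<equiv> nonisotropic_roots sc br B H"
abbreviation "dual \<equiv> dual_elem sc H"
abbreviation "tv \<equiv> tvec B H"
abbreviation rf ("\<langle>_,/ _\<rangle>") where "\<langle>u, w\<rangle> \<equiv> rform B H u w"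

lemma br_linear_left: "br (sc a x + y) z = sc a (br x z) + br y z"
  and br_linear_right: "br z (sc a x + y) = sc a (br z x) + br z y"
  and br_self: "br x x = 0"
  and jacobi: "br x (br y z) + br y (br z x) + br z (br x y) = 0"
  using grla by (simp_all add: grla_def lie_algebra_def)

lemma B_sym: "B x y = B y x"
  and B_linear_left: "B (sc a x + y) z = a * B x z + B y z"
  and B_nondegenerate: "(\<And>y. B x y = 0) \<Longrightarrow> x = 0"
  and B_invariant: "B (br x y) z = B x (br y z)"
  and H_subspace: "V.subspace H"
  and H_self_centralizing: "{x. \<forall>h\<in>H. br h x = 0} = H"
  and root_space_decomposition: "\<exists>F f. finite F \<and> F \<subseteq> {\<alpha>. dual \<alpha>} \<and>
                 (\<forall>\<alpha>\<in>F. f \<alpha> \<in> rspace \<alpha>) \<and> x = sum f F"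
  and locally_nilpotent: "\<alpha> \<in> Rx \<Longrightarrow> e \<in> rspace \<alpha> \<Longrightarrow> \<exists>n. (br e ^^ n) y = 0"
  using grla unfolding grla_def by meson+

lemma br_add_left: "br (x + y) z = br x z + br y z"
  and br_add_right: "br z (x + y) = br z x + br z y"
  using br_linear_left[of 1] br_linear_right[of _ 1] by simp_all

lemma br_zero_left [simp]: "br 0 z = 0"
  and br_zero_right [simp]: "br z 0 = 0"
  using br_add_left[of 0 0] br_add_right[of _ 0 0] by simp_all

lemma br_scale_left: "br (sc a x) z = sc a (br x z)"
  and br_scale_right: "br z (sc a x) = sc a (br z x)"
  using br_linear_left[of a x 0] br_linear_right[of z a x 0] by simp_all

lemma br_antisym: "br x y = - br y x"
proof -
  have "br x x + br x y + (br y x + br y y) = 0"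
    using br_self[of "x + y"] by (simp add: br_add_left br_add_right add_ac)
  then show ?thesis
    by (simp add: br_self eq_neg_iff_add_eq_0)
qed

lemma br_neg_right: "br z (- x) = - br z x"
  using br_add_right[of z x "- x"] by (simp add: eq_neg_iff_add_eq_0 add.commute)

lemma br_derivation: "br x (br y z) = br (br x y) z + br y (br x z)"
  using jacobi[of x y z] br_antisym[of z "br x y"] br_antisym[of z x] br_neg_right[of y "br x z"]
  by (simp add: algebra_simps eq_neg_iff_add_eq_0)

lemma B_linear_right: "B z (sc a x + y) = a * B z x + B z y"
  using B_linear_left B_sym by metis

lemma B_add_left: "B (x + y) z = B x z + B y z"
  using B_linear_left[of 1 x y] by simp

lemma B_zero_left [simp]: "B 0 z = 0"
  and B_zero_right [simp]: "B z 0 = 0"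
  using B_add_left[of 0 0 z] B_sym by simp_all

lemma B_scale_left: "B (sc a x) z = a * B x z"
  and B_scale_right: "B z (sc a x) = a * B z x"
  using B_linear_left[of a x 0] B_linear_right[of z a x 0] by simp_all

lemma B_neg_left: "B (- x) z = - B x z"
  using B_add_left[of x "- x" z] by (simp add: eq_neg_iff_add_eq_0 add.commute)

lemma B_diff_left: "B (x - y) z = B x z - B y z"
  using B_add_left[of x "- y" z] by (simp add: B_neg_left)

lemma B_neg_right: "B z (- x) = - B z x"
  using B_neg_left B_sym by metis

lemma B_sum_right: "finite F \<Longrightarrow> B z (sum f F) = (\<Sum>a\<in>F. B z (f a))"
  by (induct F rule: finite_induct) (simp_all add: B_sym[of z] B_add_left)

lemma H_zero: "0 \<in> H"
  and H_add: "x \<in> H \<Longrightarrow> y \<in> H \<Longrightarrow> x + y \<in> H"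
  and H_scale: "x \<in> H \<Longrightarrow> sc a x \<in> H"
  and H_diff: "x \<in> H \<Longrightarrow> y \<in> H \<Longrightarrow> x - y \<in> H"
  using H_subspace V.subspace_0 V.subspace_add V.subspace_scale V.subspace_diff by blast+

lemma mem_rspace: "x \<in> rspace \<alpha> \<longleftrightarrow> (\<forall>h\<in>H. br h x = sc (\<alpha> h) x)"
  by (simp add: root_space_def)

lemma scale_in_rspace: "x \<in> rspace \<alpha> \<Longrightarrow> sc a x \<in> rspace \<alpha>"
  by (simp add: mem_rspace br_scale_right V.scale_left_commute)

lemma br_in_rspace:
  assumes "x \<in> rspace \<alpha>" "y \<in> rspace \<beta>"
  shows "br x y \<in> rspace (\<lambda>z. \<alpha> z + \<beta> z)"
  using assms by (simp add: mem_rspace br_derivation br_scale_left br_scale_right V.scale_left_distrib)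

lemma rspace_zero: "rspace (\<lambda>_. 0) = H"
  using H_self_centralizing by (auto simp: mem_rspace)

lemma B_rspace:
  assumes "x \<in> rspace \<alpha>" "y \<in> rspace \<beta>" "h \<in> H"
  shows "(\<alpha> h + \<beta> h) * B x y = 0"
proof -
  have "\<alpha> h * B x y = B (br h x) y"
    using assms by (simp add: mem_rspace B_scale_left)
  also have "\<dots> = - B x (br h y)"
    by (simp add: br_antisym[of h x] B_neg_left B_invariant)
  also have "\<dots> = - (\<beta> h * B x y)"
    using assms by (simp add: mem_rspace B_scale_right)
  finally show ?thesis
    by (simp add: algebra_simps)
qed

lemma dual_ext:
  assumes "dual \<alpha>" "dual \<beta>" "\<forall>h\<in>H. \<alpha> h = \<beta> h"
  shows "\<alpha> = \<beta>"
proof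
  fix x show "\<alpha> x = \<beta> x"
    using assms by (cases "x \<in> H") (auto simp: dual_elem_def)
qed

lemma dual_lincomb: "dual \<alpha> \<Longrightarrow> dual \<beta> \<Longrightarrow> dual (\<lambda>x. a * \<alpha> x + b * \<beta> x)"
  unfolding dual_elem_def by (auto simp: algebra_simps)

lemma dual_scale:
  assumes "dual \<alpha>" "h \<in> H"
  shows "\<alpha> (sc a h) = a * \<alpha> h"
proof -
  have lin: "\<alpha> (sc a h1 + h2) = a * \<alpha> h1 + \<alpha> h2" if "h1 \<in> H" "h2 \<in> H" for a h1 h2
    using assms(1) that unfolding dual_elem_def by blast
  have "\<alpha> 0 = 0"
    using lin[OF H_zero H_zero, of 1] by simp
  then show ?thesis
    using lin[OF assms(2) H_zero, of a] by simp
qed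

lemma B_nondegenerate_on_H:
  assumes h: "h \<in> H" and orth: "\<forall>k\<in>H. B h k = 0"
  shows "h = 0"
proof (rule B_nondegenerate)
  fix y
  obtain F f where F: "finite F" "F \<subseteq> {\<alpha>. dual \<alpha>}" "\<forall>\<alpha>\<in>F. f \<alpha> \<in> rspace \<alpha>" "y = sum f F"
    using root_space_decomposition[of y] by blast
  have "B h (f \<gamma>) = 0" if "\<gamma> \<in> F" for \<gamma>
  proof (cases "\<forall>k\<in>H. \<gamma> k = 0")
    case True
    then have "\<gamma> = (\<lambda>_. 0)"
      using dual_ext[of \<gamma> "\<lambda>_. 0"] F \<open>\<gamma> \<in> F\<close> by (auto simp: dual_elem_def)
    then have "f \<gamma> \<in> H"
      using F \<open>\<gamma> \<in> F\<close> rspace_zero by auto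
    then show ?thesis using orth by simp
  next
    case False
    then obtain k where "k \<in> H" "\<gamma> k \<noteq> 0" by auto
    moreover have "h \<in> rspace (\<lambda>_. 0)" using h rspace_zero by simp
    ultimately show ?thesis
      using B_rspace[of h "\<lambda>_. 0" "f \<gamma>" \<gamma> k] F \<open>\<gamma> \<in> F\<close> by auto
  qed
  then show "B h y = 0"
    using F by (simp add: B_sum_right)
qed

text \<open>\<open>tvec\<close> is a definite description, so \<open>tv u\<close> is meaningful only for functionals \<open>u\<close>
  represented by an element of \<open>H\<close>.\<close>

definition has_tvec :: "('g \<Rightarrow> complex) \<Rightarrow> bool"
  where "has_tvec u \<longleftrightarrow> (\<exists>t\<in>H. \<forall>h\<in>H. B t h = u h)"

lemma tvec_unique:
  assumes "t \<in> H" "\<forall>h\<in>H. B t h = u h" "t' \<in> H" "\<forall>h\<in>H. B t' h = u h"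
  shows "t = t'"
  using B_nondegenerate_on_H[of "t - t'"] assms by (simp add: H_diff B_diff_left)

lemma tvec_eq:
  assumes "t \<in> H" "\<forall>h\<in>H. B t h = u h"
  shows "tv u = t"
  unfolding tvec_def by (rule the_equality) (use assms tvec_unique in auto)

lemma tvec_in_H: "has_tvec u \<Longrightarrow> tv u \<in> H"
  and B_tvec: "has_tvec u \<Longrightarrow> h \<in> H \<Longrightarrow> B (tv u) h = u h"
  unfolding has_tvec_def using tvec_eq by metis+

lemma has_tvec_lincomb:
  assumes "has_tvec u" "has_tvec w"
  shows "has_tvec (\<lambda>x. a * u x + b * w x)"
  unfolding has_tvec_def using assms
  by (intro bexI[of _ "sc a (tv u) + sc b (tv w)"])
    (simp_all add: B_linear_left B_add_left B_scale_left B_tvec H_add H_scale tvec_in_H)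

lemma has_tvec_neg: "has_tvec u \<Longrightarrow> has_tvec (\<lambda>x. - u x)"
  using has_tvec_lincomb[of u u "-1" 0] by simp

lemma has_tvec_add: "has_tvec u \<Longrightarrow> has_tvec w \<Longrightarrow> has_tvec (\<lambda>x. u x + w x)"
  using has_tvec_lincomb[of u w 1 1] by simp

lemma has_tvec_diff_scale: "has_tvec u \<Longrightarrow> has_tvec w \<Longrightarrow> has_tvec (\<lambda>x. u x - s * w x)"
  using has_tvec_lincomb[of u w 1 "- s"] by simp

lemma has_tvec_sum:
  assumes "finite F" "\<forall>\<beta>\<in>F. has_tvec \<beta>"
  shows "has_tvec (\<lambda>x. \<Sum>\<beta>\<in>F. a \<beta> * \<beta> x)"
  using assms
proof (induct F rule: finite_induct)
  case empty
  show ?case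
    unfolding has_tvec_def using H_zero by (intro bexI[of _ 0]) simp_all
next
  case (insert \<beta> F)
  then show ?case
    using has_tvec_lincomb[of \<beta> "\<lambda>x. \<Sum>\<beta>\<in>F. a \<beta> * \<beta> x" "a \<beta>" 1] by simp
qed

lemma rform_sym: "\<langle>u, w\<rangle> = \<langle>w, u\<rangle>"
  unfolding rform_def by (rule B_sym)

lemma rform_eval: "has_tvec u \<Longrightarrow> has_tvec w \<Longrightarrow> \<langle>u, w\<rangle> = u (tv w)"
  unfolding rform_def by (simp add: B_tvec tvec_in_H)

lemma rform_neg_left: "has_tvec u \<Longrightarrow> has_tvec w \<Longrightarrow> \<langle>\<lambda>x. - u x, w\<rangle> = - \<langle>u, w\<rangle>"
  by (simp add: rform_eval has_tvec_neg)

lemma rform_neg_right: "has_tvec u \<Longrightarrow> has_tvec w \<Longrightarrow> \<langle>w, \<lambda>x. - u x\<rangle> = - \<langle>w, u\<rangle>"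
  by (simp add: rform_eval has_tvec_neg rform_sym[of w])

lemma rform_add_left:
  "has_tvec u \<Longrightarrow> has_tvec v \<Longrightarrow> has_tvec w \<Longrightarrow> \<langle>\<lambda>x. u x + v x, w\<rangle> = \<langle>u, w\<rangle> + \<langle>v, w\<rangle>"
  by (simp add: rform_eval has_tvec_add)

lemma rform_add_right:
  "has_tvec u \<Longrightarrow> has_tvec v \<Longrightarrow> has_tvec w \<Longrightarrow> \<langle>w, \<lambda>x. u x + v x\<rangle> = \<langle>w, u\<rangle> + \<langle>w, v\<rangle>"
  by (simp add: rform_eval has_tvec_add rform_sym[of w])

lemma rform_diff_scale_left:
  "has_tvec u \<Longrightarrow> has_tvec v \<Longrightarrow> has_tvec w \<Longrightarrow> \<langle>\<lambda>x. u x - s * v x, w\<rangle> = \<langle>u, w\<rangle> - s * \<langle>v, w\<rangle>"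
  by (simp add: rform_eval has_tvec_diff_scale)

lemma rform_diff_scale_right:
  "has_tvec u \<Longrightarrow> has_tvec v \<Longrightarrow> has_tvec w \<Longrightarrow> \<langle>w, \<lambda>x. u x - s * v x\<rangle> = \<langle>w, u\<rangle> - s * \<langle>w, v\<rangle>"
  by (simp add: rform_eval has_tvec_diff_scale rform_sym[of w])

lemma rform_diff_scale_both:
  assumes "has_tvec u" "has_tvec v"
  shows "\<langle>\<lambda>x. u x - s * v x, \<lambda>x. u x - s * v x\<rangle> = \<langle>u, u\<rangle> - 2 * s * \<langle>u, v\<rangle> + s\<^sup>2 * \<langle>v, v\<rangle>"
proof -
  have "\<langle>\<lambda>x. u x - s * v x, \<lambda>x. u x - s * v x\<rangle>
      = (\<langle>u, u\<rangle> - s * \<langle>u, v\<rangle>) - s * (\<langle>v, u\<rangle> - s * \<langle>v, v\<rangle>)"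
    using assms by (simp add: rform_diff_scale_left rform_diff_scale_right has_tvec_diff_scale)
  then show ?thesis
    by (simp add: rform_sym[of v u] power2_eq_square algebra_simps)
qed

lemma rform_sum_left:
  assumes "finite F" "\<forall>\<beta>\<in>F. has_tvec \<beta>" "has_tvec w"
  shows "\<langle>\<lambda>x. \<Sum>\<beta>\<in>F. a \<beta> * \<beta> x, w\<rangle> = (\<Sum>\<beta>\<in>F. a \<beta> * \<langle>\<beta>, w\<rangle>)"
  using assms by (simp add: rform_eval has_tvec_sum)

lemma rform_sum_right:
  assumes "finite F" "\<forall>\<beta>\<in>F. has_tvec \<beta>" "has_tvec w"
  shows "\<langle>w, \<lambda>x. \<Sum>\<beta>\<in>F. a \<beta> * \<beta> x\<rangle> = (\<Sum>\<beta>\<in>F. a \<beta> * \<langle>w, \<beta>\<rangle>)"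
proof -
  have "\<langle>w, \<lambda>x. \<Sum>\<beta>\<in>F. a \<beta> * \<beta> x\<rangle> = (\<Sum>\<beta>\<in>F. a \<beta> * \<langle>\<beta>, w\<rangle>)"
    using rform_sum_left[OF assms] by (simp only: rform_sym[of w])
  also have "\<dots> = (\<Sum>\<beta>\<in>F. a \<beta> * \<langle>w, \<beta>\<rangle>)"
    by (simp only: rform_sym[of _ w])
  finally show ?thesis .
qed

lemma has_tvec_msum: "\<forall>u\<in>#M. has_tvec u \<Longrightarrow> has_tvec (msum M)"
proof (induct M)
  case empty
  show ?case
    unfolding has_tvec_def msum_def using H_zero by (intro bexI[of _ 0]) simp_all
next
  case (add u M)
  then show ?case
    by (simp add: msum_add_mset has_tvec_add)
qed

lemma rform_msum_left:
  assumes "\<forall>u\<in>#M. has_tvec u" "has_tvec w"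
  shows "\<langle>msum M, w\<rangle> = (\<Sum>u\<in>#M. \<langle>u, w\<rangle>)"
proof -
  have "\<langle>msum M, w\<rangle> = (\<Sum>u\<in>#M. u (tv w))"
    using assms has_tvec_msum by (simp add: rform_eval msum_def)
  also have "\<dots> = (\<Sum>u\<in>#M. \<langle>u, w\<rangle>)"
    using assms by (intro arg_cong[where f = sum_mset] image_mset_cong) (simp add: rform_eval)
  finally show ?thesis .
qed

lemma rform_msum_right:
  assumes "\<forall>u\<in>#M. has_tvec u" "has_tvec w"
  shows "\<langle>w, msum M\<rangle> = (\<Sum>u\<in>#M. \<langle>w, u\<rangle>)"
proof -
  have "\<langle>w, msum M\<rangle> = (\<Sum>u\<in>#M. \<langle>u, w\<rangle>)"
    using rform_msum_left[OF assms] by (simp only: rform_sym[of w])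
  also have "\<dots> = (\<Sum>u\<in>#M. \<langle>w, u\<rangle>)"
    by (simp only: rform_sym[of _ w])
  finally show ?thesis .
qed

subsection \<open>Roots and \<open>sl\<^sub>2\<close>-strings\<close>

lemma mem_roots: "\<alpha> \<in> R \<longleftrightarrow> dual \<alpha> \<and> (\<exists>x\<in>rspace \<alpha>. x \<noteq> 0)"
  unfolding roots_def by (auto simp: mem_rspace)

lemma mem_Rx: "\<alpha> \<in> Rx \<longleftrightarrow> \<alpha> \<in> R \<and> \<langle>\<alpha>, \<alpha>\<rangle> \<noteq> 0"
  by (simp add: nonisotropic_roots_def)

lemma rspace_pairing:
  assumes "\<alpha> \<in> R" "e \<in> rspace \<alpha>" "e \<noteq> 0"
  obtains f where "f \<in> rspace (\<lambda>x. - \<alpha> x)" "B e f \<noteq> 0"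
proof -
  obtain y where "B e y \<noteq> 0"
    using B_nondegenerate[of e] assms(3) by blast
  moreover obtain F f where F: "finite F" "F \<subseteq> {\<alpha>. dual \<alpha>}" "\<forall>\<alpha>\<in>F. f \<alpha> \<in> rspace \<alpha>" "y = sum f F"
    using root_space_decomposition[of y] by blast
  ultimately have "(\<Sum>\<gamma>\<in>F. B e (f \<gamma>)) \<noteq> 0"
    by (simp add: B_sum_right)
  then obtain \<gamma> where \<gamma>: "\<gamma> \<in> F" "B e (f \<gamma>) \<noteq> 0"
    using sum.neutral[of F "\<lambda>\<gamma>. B e (f \<gamma>)"] by blast
  have "\<forall>h\<in>H. \<gamma> h = - \<alpha> h"
    using B_rspace[OF assms(2), of "f \<gamma>" \<gamma>] F(3) \<gamma> by (simp add: add_eq_0_iff)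
  then have "\<gamma> = (\<lambda>x. - \<alpha> x)"
    using F \<gamma> assms(1) dual_lincomb[of \<alpha> \<alpha> "-1" 0] by (intro dual_ext) (auto simp: mem_roots)
  then show ?thesis
    using that F(3) \<gamma> by blast
qed

lemma neg_root:
  assumes "\<alpha> \<in> R"
  shows "(\<lambda>x. - \<alpha> x) \<in> R"
proof -
  obtain e where e: "e \<in> rspace \<alpha>" "e \<noteq> 0"
    using assms mem_roots by auto
  obtain f where "f \<in> rspace (\<lambda>x. - \<alpha> x)" "B e f \<noteq> 0"
    using rspace_pairing[OF assms e] by blast
  moreover have "dual (\<lambda>x. - \<alpha> x)"
    using assms dual_lincomb[of \<alpha> \<alpha> "-1" 0] by (simp add: mem_roots)
  ultimately show ?thesis
    unfolding mem_roots by (metis B_zero_right)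
qed

lemma br_opposite_rspaces:
  assumes "e \<in> rspace \<alpha>" "f \<in> rspace (\<lambda>x. - \<alpha> x)"
  shows "br e f \<in> H" and "\<forall>h\<in>H. B (br e f) h = B e f * \<alpha> h"
proof -
  show "br e f \<in> H"
    using br_in_rspace[OF assms] rspace_zero by simp
  show "\<forall>h\<in>H. B (br e f) h = B e f * \<alpha> h"
    using assms(2) by (simp add: B_invariant br_antisym[of f] mem_rspace B_neg_right B_scale_right)
qed

lemma root_has_tvec:
  assumes "\<alpha> \<in> R"
  shows "has_tvec \<alpha>"
proof -
  obtain e where e: "e \<in> rspace \<alpha>" "e \<noteq> 0"
    using assms mem_roots by auto
  obtain f where f: "f \<in> rspace (\<lambda>x. - \<alpha> x)" "B e f \<noteq> 0"
    using rspace_pairing[OF assms e] by blast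
  show ?thesis
    unfolding has_tvec_def using br_opposite_rspaces[OF e(1) f(1)] f(2)
    by (intro bexI[of _ "sc (1 / B e f) (br e f)"]) (simp_all add: B_scale_left H_scale)
qed

lemma br_opposite_rspaces_eq:
  assumes "\<alpha> \<in> R" "e \<in> rspace \<alpha>" "f \<in> rspace (\<lambda>x. - \<alpha> x)"
  shows "br e f = sc (B e f) (tv \<alpha>)"
  using br_opposite_rspaces[OF assms(2,3)] root_has_tvec[OF assms(1)]
  by (intro tvec_unique[where u = "\<lambda>h. B e f * \<alpha> h"]) (simp_all add: H_scale tvec_in_H B_scale_left B_tvec)

lemma Rx_root: "\<alpha> \<in> Rx \<Longrightarrow> \<alpha> \<in> R"
  and Rx_nonisotropic: "\<alpha> \<in> Rx \<Longrightarrow> \<langle>\<alpha>, \<alpha>\<rangle> \<noteq> 0"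
  and Rx_has_tvec: "\<alpha> \<in> Rx \<Longrightarrow> has_tvec \<alpha>"
  by (simp_all add: mem_Rx root_has_tvec)

lemma neg_Rx: "\<alpha> \<in> Rx \<Longrightarrow> (\<lambda>x. - \<alpha> x) \<in> Rx"
  by (simp add: mem_Rx neg_root rform_neg_left rform_neg_right root_has_tvec has_tvec_neg)

lemma sl2_triple:
  assumes "\<alpha> \<in> Rx"
  obtains e f where "e \<in> rspace \<alpha>" "e \<noteq> 0" "f \<in> rspace (\<lambda>x. - \<alpha> x)"
    "br e f = sc (2 / \<langle>\<alpha>, \<alpha>\<rangle>) (tv \<alpha>)"
proof -
  obtain e where e: "e \<in> rspace \<alpha>" "e \<noteq> 0"
    using assms by (auto simp: mem_Rx mem_roots)
  obtain f where f: "f \<in> rspace (\<lambda>x. - \<alpha> x)" "B e f \<noteq> 0"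
    using rspace_pairing[OF Rx_root[OF assms] e] by blast
  have "br e (sc (2 / (\<langle>\<alpha>, \<alpha>\<rangle> * B e f)) f) = sc (2 / \<langle>\<alpha>, \<alpha>\<rangle>) (tv \<alpha>)"
    using br_opposite_rspaces_eq[OF Rx_root[OF assms] e(1) f(1)] Rx_nonisotropic[OF assms] f(2)
    by (simp add: br_scale_right)
  then show ?thesis
    using that e scale_in_rspace[OF f(1)] by blast
qed

lemma br_power_in_rspace:
  assumes "f \<in> rspace \<beta>" "v \<in> rspace \<mu>"
  shows "(br f ^^ j) v \<in> rspace (\<lambda>x. \<mu> x + of_nat j * \<beta> x)"
proof (induct j)
  case 0
  then show ?case using assms by simp
next
  case (Suc j)
  have "(\<lambda>x. \<beta> x + (\<mu> x + of_nat j * \<beta> x)) = (\<lambda>x. \<mu> x + of_nat (Suc j) * \<beta> x)"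
    by (auto simp: algebra_simps)
  then show ?case
    using br_in_rspace[OF assms(1) Suc] by simp
qed

text \<open>A vector of weight \<open>\<mu>\<close> killed by \<open>e\<close> generates an \<open>sl\<^sub>2\<close>-string on which \<open>f\<close>
  is nilpotent; comparing \<open>e f\<^sup>m\<^sup>+\<^sup>1 v = (m+1)(\<mu>(h) - m) f\<^sup>m v\<close> with \<open>f\<^sup>m\<^sup>+\<^sup>1 v = 0\<close> forces
  \<open>\<mu>(h) = m\<close>.\<close>

lemma sl2_lowering:
  assumes e: "e \<in> rspace \<alpha>" and f: "f \<in> rspace (\<lambda>x. - \<alpha> x)"
    and h: "br e f = h" "h \<in> H" "\<alpha> h = 2"
    and v: "v \<in> rspace \<mu>" "v \<noteq> 0" "br e v = 0"
    and nil: "(br f ^^ n) v = 0"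
  obtains m :: nat where "\<mu> h = of_nat m" "\<forall>j\<le>m. (br f ^^ j) v \<noteq> 0"
proof -
  let ?v = "\<lambda>j. (br f ^^ j) v"
  have weight: "br h (?v j) = sc (\<mu> h - 2 * of_nat j) (?v j)" for j
    using br_power_in_rspace[OF f v(1), of j] h(2,3) by (simp add: mem_rspace)
  have raise: "br e (?v (Suc j)) = sc (of_nat (Suc j) * (\<mu> h - of_nat j)) (?v j)" for j
  proof (induct j)
    case 0
    show ?case
      using br_derivation[of e f v] h(1,2) v mem_rspace by simp
  next
    case (Suc j)
    have "br e (?v (Suc (Suc j))) = br h (?v (Suc j)) + br f (br e (?v (Suc j)))"
      using br_derivation[of e f "?v (Suc j)"] h(1) by simp
    also have "\<dots> = sc (\<mu> h - 2 * of_nat (Suc j) + of_nat (Suc j) * (\<mu> h - of_nat j)) (?v (Suc j))"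
      using weight[of "Suc j"] Suc by (simp add: br_scale_right V.scale_left_distrib)
    also have "\<mu> h - 2 * of_nat (Suc j) + of_nat (Suc j) * (\<mu> h - of_nat j)
        = of_nat (Suc (Suc j)) * (\<mu> h - of_nat (Suc j))"
      by (simp add: algebra_simps)
    finally show ?case .
  qed
  obtain m where m: "\<forall>j\<le>m. ?v j \<noteq> 0" "?v (Suc m) = 0"
    using last_nonzero_iterate[OF nil v(2)] by blast
  then have "of_nat (Suc m) * (\<mu> h - of_nat m) = (0::complex)"
    using raise[of m] by simp
  then have "\<mu> h = of_nat m"
    by (simp del: of_nat_Suc)
  then show ?thesis
    using that m(1) by blast
qed

lemma highest_weight_vector:
  assumes "\<alpha> \<in> Rx" "e \<in> rspace \<alpha>" "y \<in> rspace \<beta>" "y \<noteq> 0"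
  obtains k where "(br e ^^ k) y \<noteq> 0" "br e ((br e ^^ k) y) = 0"
    "(br e ^^ k) y \<in> rspace (\<lambda>x. \<beta> x + of_nat k * \<alpha> x)"
proof -
  obtain n where "(br e ^^ n) y = 0"
    using locally_nilpotent[OF assms(1,2)] by blast
  then obtain k where "(br e ^^ k) y \<noteq> 0" "(br e ^^ Suc k) y = 0"
    using last_nonzero_iterate assms(4) by blast
  then show ?thesis
    using that br_power_in_rspace[OF assms(2,3)] by simp
qed

section \<open>Cartan integers\<close>

definition cartan :: "('g \<Rightarrow> complex) \<Rightarrow> ('g \<Rightarrow> complex) \<Rightarrow> complex"
  where "cartan u w = 2 * \<langle>u, w\<rangle> / \<langle>w, w\<rangle>"

lemma cartan_eq_iff: "\<langle>w, w\<rangle> \<noteq> 0 \<Longrightarrow> cartan u w = a \<longleftrightarrow> 2 * \<langle>u, w\<rangle> = a * \<langle>w, w\<rangle>"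
  unfolding cartan_def by (auto simp: field_simps)

lemma cartan_neg_left: "has_tvec u \<Longrightarrow> has_tvec w \<Longrightarrow> cartan (\<lambda>x. - u x) w = - cartan u w"
  unfolding cartan_def by (simp add: rform_neg_left)

lemma cartan_neg_right: "has_tvec u \<Longrightarrow> has_tvec w \<Longrightarrow> cartan u (\<lambda>x. - w x) = - cartan u w"
  unfolding cartan_def by (simp add: rform_neg_left rform_neg_right has_tvec_neg)

text \<open>Raising a root vector of \<open>\<beta>\<close> with \<open>e\<close> to a highest weight vector of weight
  \<open>\<beta> + k\<alpha>\<close> and lowering it with \<open>f\<close> gives the unbroken string \<open>\<beta> + k\<alpha>, \<dots>, \<beta> + (k - m)\<alpha>\<close>,
  where \<open>m = \<beta>(h) + 2k\<close>; so the Cartan number \<open>\<beta>(h)\<close> equals \<open>m - 2k\<close>.\<close>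

lemma root_string_nonneg:
  assumes \<alpha>: "\<alpha> \<in> Rx" and \<beta>: "\<beta> \<in> R"
  obtains N :: int where "cartan \<beta> \<alpha> = of_int N"
    "\<forall>t. 0 \<le> t \<and> t \<le> N \<longrightarrow> (\<lambda>x. \<beta> x - of_int t * \<alpha> x) \<in> R"
proof -
  obtain e f where ef: "e \<in> rspace \<alpha>" "f \<in> rspace (\<lambda>x. - \<alpha> x)"
    "br e f = sc (2 / \<langle>\<alpha>, \<alpha>\<rangle>) (tv \<alpha>)"
    using sl2_triple[OF \<alpha>] by blast
  define h where "h = sc (2 / \<langle>\<alpha>, \<alpha>\<rangle>) (tv \<alpha>)"
  have "dual \<alpha>" "dual \<beta>" "has_tvec \<alpha>" "has_tvec \<beta>"
    using \<alpha> \<beta> by (simp_all add: mem_Rx mem_roots root_has_tvec)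
  then have h: "h \<in> H" "\<alpha> h = 2" "\<beta> h = cartan \<beta> \<alpha>"
    using Rx_nonisotropic[OF \<alpha>] unfolding h_def cartan_def
    by (simp_all add: H_scale tvec_in_H dual_scale rform_eval[symmetric])
  obtain y where y: "y \<in> rspace \<beta>" "y \<noteq> 0"
    using \<beta> mem_roots by auto
  obtain k where v: "(br e ^^ k) y \<noteq> 0" "br e ((br e ^^ k) y) = 0"
    "(br e ^^ k) y \<in> rspace (\<lambda>x. \<beta> x + of_nat k * \<alpha> x)"
    using highest_weight_vector[OF \<alpha> ef(1) y] by blast
  define v where "v = (br e ^^ k) y"
  obtain n where "(br f ^^ n) v = 0"
    using locally_nilpotent[OF neg_Rx[OF \<alpha>] ef(2)] by blast
  then obtain m :: nat where m: "\<beta> h + of_nat k * \<alpha> h = of_nat m" "\<forall>j\<le>m. (br f ^^ j) v \<noteq> 0"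
    using sl2_lowering[OF ef(1,2) ef(3)[folded h_def] h(1,2), of v] v unfolding v_def by blast
  define N where "N = int m - 2 * int k"
  have "cartan \<beta> \<alpha> = of_int N"
    using m(1) h unfolding N_def by (simp add: algebra_simps)
  moreover have "(\<lambda>x. \<beta> x - of_int t * \<alpha> x) \<in> R" if t: "0 \<le> t" "t \<le> N" for t
  proof -
    define j where "j = nat (int k + t)"
    have "(\<lambda>x. (\<beta> x + of_nat k * \<alpha> x) + of_nat j * - \<alpha> x) = (\<lambda>x. \<beta> x - of_int t * \<alpha> x)"
      using t unfolding j_def by (auto simp: algebra_simps)
    then have "(br f ^^ j) v \<in> rspace (\<lambda>x. \<beta> x - of_int t * \<alpha> x)"
      using br_power_in_rspace[OF ef(2) v(3)[folded v_def], of j] by simp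
    moreover have "(br f ^^ j) v \<noteq> 0"
      using m(2) t unfolding j_def N_def by simp
    moreover have "dual (\<lambda>x. \<beta> x - of_int t * \<alpha> x)"
      using dual_lincomb[OF \<open>dual \<beta>\<close> \<open>dual \<alpha>\<close>, of 1 "- of_int t"] by simp
    ultimately show ?thesis
      unfolding mem_roots by blast
  qed
  ultimately show ?thesis
    using that by blast
qed

lemma root_string:
  assumes \<alpha>: "\<alpha> \<in> Rx" and \<beta>: "\<beta> \<in> R" and N: "cartan \<beta> \<alpha> = of_int N"
    and t: "0 \<le> t \<and> t \<le> N \<or> N \<le> t \<and> t \<le> 0"
  shows "(\<lambda>x. \<beta> x - of_int t * \<alpha> x) \<in> R"
  using t
proof
  assume "0 \<le> t \<and> t \<le> N"
  then show ?thesis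
    using root_string_nonneg[OF \<alpha> \<beta>] N by (metis of_int_eq_iff)
next
  assume t: "N \<le> t \<and> t \<le> 0"
  have "cartan \<beta> (\<lambda>x. - \<alpha> x) = of_int (- N)"
    using N \<alpha> \<beta> by (simp add: cartan_neg_right Rx_has_tvec root_has_tvec)
  then have "(\<lambda>x. \<beta> x - of_int (- t) * - \<alpha> x) \<in> R"
    using root_string_nonneg[OF neg_Rx[OF \<alpha>] \<beta>] t by (metis neg_0_le_iff_le neg_le_iff_le of_int_eq_iff)
  then show ?thesis
    by simp
qed

lemma cartan_integer:
  assumes "\<alpha> \<in> Rx" "\<beta> \<in> R"
  obtains N :: int where "cartan \<beta> \<alpha> = of_int N"
  using root_string_nonneg[OF assms] by blast

lemma reflection_root:
  assumes "\<alpha> \<in> Rx" "\<beta> \<in> R"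
  shows "(\<lambda>x. \<beta> x - cartan \<beta> \<alpha> * \<alpha> x) \<in> R"
proof -
  obtain N where N: "cartan \<beta> \<alpha> = of_int N"
    using cartan_integer[OF assms] .
  have "0 \<le> N \<and> N \<le> N \<or> N \<le> N \<and> N \<le> 0"
    by auto
  then show ?thesis
    using root_string[OF assms N] N by simp
qed

lemma cartan_eq: "\<langle>w, w\<rangle> \<noteq> 0 \<Longrightarrow> cartan u w = a \<Longrightarrow> 2 * \<langle>u, w\<rangle> = a * \<langle>w, w\<rangle>"
  and cartan_eqI: "\<langle>w, w\<rangle> \<noteq> 0 \<Longrightarrow> 2 * \<langle>u, w\<rangle> = a * \<langle>w, w\<rangle> \<Longrightarrow> cartan u w = a"
  by (simp_all add: cartan_eq_iff)

definition cartan_pair :: "('g \<Rightarrow> complex) \<Rightarrow> ('g \<Rightarrow> complex) \<Rightarrow> int \<Rightarrow> int \<Rightarrow> bool"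
  where "cartan_pair x y N M \<longleftrightarrow> x \<in> Rx \<and> y \<in> Rx \<and> cartan y x = of_int N \<and> cartan x y = of_int M"

lemma cartan_pair_exists:
  assumes "x \<in> Rx" "y \<in> Rx"
  obtains N M where "cartan_pair x y N M"
  using cartan_integer[OF assms(1) Rx_root[OF assms(2)]] cartan_integer[OF assms(2) Rx_root[OF assms(1)]]
    assms unfolding cartan_pair_def by metis

lemma cartan_pair_swap: "cartan_pair x y N M \<Longrightarrow> cartan_pair y x M N"
  unfolding cartan_pair_def by blast

lemma cartan_pair_neg: "cartan_pair x y N M \<Longrightarrow> cartan_pair (\<lambda>z. - x z) y (- N) (- M)"
  unfolding cartan_pair_def by (simp add: neg_Rx cartan_neg_left cartan_neg_right Rx_has_tvec)

lemma cartan_pair_rform: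
  assumes "cartan_pair x y N M"
  shows "2 * \<langle>x, y\<rangle> = of_int N * \<langle>x, x\<rangle>" and "2 * \<langle>x, y\<rangle> = of_int M * \<langle>y, y\<rangle>"
  using assms cartan_eq[of x y] cartan_eq[of y x] unfolding cartan_pair_def
  by (simp_all add: Rx_nonisotropic rform_sym[of y x])

lemma cartan_pair_zero_iff:
  assumes "cartan_pair x y N M"
  shows "N = 0 \<longleftrightarrow> \<langle>x, y\<rangle> = 0" and "M = 0 \<longleftrightarrow> \<langle>x, y\<rangle> = 0"
  using cartan_pair_rform[OF assms] assms unfolding cartan_pair_def
  by (auto simp: Rx_nonisotropic)

text \<open>The rank-two analysis below uses only the integrality of Cartan numbers and the
  root strings, since no positivity of the form is available yet.\<close>

lemma diff_root_cartan_pair: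
  assumes x: "x \<in> Rx" and u: "u \<in> R" and N: "cartan u x = of_int N" "N \<ge> 1"
    and nonisotropic: "\<langle>u, u\<rangle> + (1 - of_int N) * \<langle>x, x\<rangle> \<noteq> 0"
  obtains K where "cartan_pair x (\<lambda>z. u z - x z) (N - 2) K"
    "of_int (N - 2) * \<langle>x, x\<rangle> = of_int K * (\<langle>u, u\<rangle> + (1 - of_int N) * \<langle>x, x\<rangle>)"
proof -
  define w where "w = (\<lambda>z. u z - of_int 1 * x z)"
  have tu: "has_tvec u" and tx: "has_tvec x"
    using u x root_has_tvec Rx_has_tvec by auto
  have e: "2 * \<langle>u, x\<rangle> = of_int N * \<langle>x, x\<rangle>"
    using cartan_eq[OF Rx_nonisotropic[OF x] N(1)] .
  have wR: "w \<in> R"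
    unfolding w_def using root_string[OF x u N(1), of 1] N(2) by simp
  have "\<langle>w, w\<rangle> = \<langle>u, u\<rangle> - 2 * \<langle>u, x\<rangle> + \<langle>x, x\<rangle>"
    using rform_diff_scale_both[OF tu tx, of 1] by (simp add: w_def)
  then have ww: "\<langle>w, w\<rangle> = \<langle>u, u\<rangle> + (1 - of_int N) * \<langle>x, x\<rangle>"
    using e by algebra
  then have wRx: "w \<in> Rx"
    using wR nonisotropic mem_Rx by simp
  have "\<langle>w, x\<rangle> = \<langle>u, x\<rangle> - \<langle>x, x\<rangle>"
    using rform_diff_scale_left[OF tu tx tx, of 1] by (simp add: w_def)
  then have wx: "2 * \<langle>w, x\<rangle> = of_int (N - 2) * \<langle>x, x\<rangle>"
    unfolding of_int_diff of_int_numeral using e by algebra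
  obtain K where K: "cartan x w = of_int K"
    using cartan_integer[OF wRx Rx_root[OF x]] .
  have "cartan w x = of_int (N - 2)"
    using wx Rx_nonisotropic[OF x] by (intro cartan_eqI) simp_all
  then have "cartan_pair x w (N - 2) K"
    using x wRx K unfolding cartan_pair_def by blast
  moreover have "of_int (N - 2) * \<langle>x, x\<rangle> = of_int K * (\<langle>u, u\<rangle> + (1 - of_int N) * \<langle>x, x\<rangle>)"
    using cartan_eq[OF Rx_nonisotropic[OF wRx] K] wx ww by (simp add: rform_sym[of x w])
  ultimately show ?thesis
    using that unfolding w_def by simp
qed

lemma cartan_pair_diff_root:
  assumes xy: "cartan_pair x y N M" and "N \<ge> 1" and D: "N + M - N * M \<noteq> 0"
  obtains K where "cartan_pair x (\<lambda>z. y z - x z) (N - 2) K" "K * (N + M - N * M) = M * (N - 2)"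
proof -
  have x: "x \<in> Rx" and y: "y \<in> Rx" and N: "cartan y x = of_int N"
    using xy unfolding cartan_pair_def by auto
  have e1: "2 * \<langle>x, y\<rangle> = of_int N * \<langle>x, x\<rangle>" and e2: "2 * \<langle>x, y\<rangle> = of_int M * \<langle>y, y\<rangle>"
    using cartan_pair_rform[OF xy] by auto
  have "\<langle>x, y\<rangle> \<noteq> 0"
    using cartan_pair_zero_iff(1)[OF xy] \<open>N \<ge> 1\<close> by simp
  have key: "of_int N * of_int M * (\<langle>y, y\<rangle> + (1 - of_int N) * \<langle>x, x\<rangle>)
      = 2 * \<langle>x, y\<rangle> * (of_int N + of_int M - of_int N * of_int M)"
    using e1 e2 by algebra
  moreover have "(of_int N + of_int M - of_int N * of_int M :: complex) \<noteq> 0"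
    using D by (metis of_int_add of_int_diff of_int_mult of_int_eq_0_iff)
  ultimately have "\<langle>y, y\<rangle> + (1 - of_int N) * \<langle>x, x\<rangle> \<noteq> 0"
    using \<open>\<langle>x, y\<rangle> \<noteq> 0\<close> by auto
  then obtain K where K: "cartan_pair x (\<lambda>z. y z - x z) (N - 2) K"
    "of_int (N - 2) * \<langle>x, x\<rangle> = of_int K * (\<langle>y, y\<rangle> + (1 - of_int N) * \<langle>x, x\<rangle>)"
    using diff_root_cartan_pair[OF x Rx_root[OF y] N \<open>N \<ge> 1\<close>] by blast
  have "2 * \<langle>x, y\<rangle> * (of_int K * (of_int N + of_int M - of_int N * of_int M))
      = 2 * \<langle>x, y\<rangle> * (of_int M * (of_int N - 2))"
    using K(2)[unfolded of_int_diff of_int_numeral] key e1 by algebra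
  then have "(of_int (K * (N + M - N * M)) :: complex) = of_int (M * (N - 2))"
    using \<open>\<langle>x, y\<rangle> \<noteq> 0\<close> by simp
  then show ?thesis
    using that K(1) by (simp only: of_int_eq_iff)
qed

lemma cartan_pair_ge_3_nonneg:
  assumes xy: "cartan_pair x y N M" and N: "N \<ge> 3"
  shows "M \<ge> 0"
proof (rule ccontr)
  assume "\<not> M \<ge> 0"
  then have M: "M < 0" by simp
  have "M * (1 - N) \<ge> 0"
    using M N by (intro mult_nonpos_nonpos) auto
  then have D: "N + M - N * M > 0"
    using N by (simp add: algebra_simps)
  have "N \<ge> 1" "N + M - N * M \<noteq> 0"
    using N D by simp_all
  then obtain K where K: "K * (N + M - N * M) = M * (N - 2)"
    using cartan_pair_diff_root[OF xy] by blast
  have "M * (N - 2) < 0"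
    using M N by (simp add: mult_less_0_iff)
  then have "K * (N + M - N * M) < 0"
    using K by simp
  then have "K < 0"
    using D by (simp add: mult_less_0_iff)
  then have "K * (N + M - N * M) \<le> (- 1) * (N + M - N * M)"
    using D by (intro mult_right_mono) auto
  then show False
    using K N M by (simp add: algebra_simps)
qed

lemma cartan_pair_opposite_signs_bound:
  assumes xy: "cartan_pair x y N M" and "N * M < 0"
  shows "\<bar>N\<bar> \<le> 2"
proof (rule ccontr)
  assume "\<not> \<bar>N\<bar> \<le> 2"
  then consider "N \<ge> 3" | "- N \<ge> 3"
    by linarith
  then show False
  proof cases
    case 1
    then show False
      using cartan_pair_ge_3_nonneg[OF xy] \<open>N * M < 0\<close> by (simp add: mult_less_0_iff)
  next
    case 2
    then show False
      using cartan_pair_ge_3_nonneg[OF cartan_pair_neg[OF xy]] \<open>N * M < 0\<close> by (simp add: mult_less_0_iff)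
  qed
qed

lemma cartan_pair_reflections:
  assumes xy: "cartan_pair x y N M"
  shows "cartan_pair (\<lambda>z. y z - of_int N * x z) (\<lambda>z. x z - of_int M * y z)
           (M * (N * M - 3)) (N * (N * M - 3))"
proof -
  have x: "x \<in> Rx" and y: "y \<in> Rx" and N: "cartan y x = of_int N" and M: "cartan x y = of_int M"
    using xy unfolding cartan_pair_def by auto
  have tx: "has_tvec x" and ty: "has_tvec y"
    using x y Rx_has_tvec by auto
  have e1: "2 * \<langle>x, y\<rangle> = of_int N * \<langle>x, x\<rangle>" and e2: "2 * \<langle>x, y\<rangle> = of_int M * \<langle>y, y\<rangle>"
    using cartan_pair_rform[OF xy] by auto
  define x' where "x' = (\<lambda>z. y z - of_int N * x z)"
  define y' where "y' = (\<lambda>z. x z - of_int M * y z)"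
  have "x' \<in> R" "y' \<in> R"
    using reflection_root[OF x Rx_root[OF y]] reflection_root[OF y Rx_root[OF x]] N M
    by (simp_all add: x'_def y'_def)
  moreover have x'x': "\<langle>x', x'\<rangle> = \<langle>y, y\<rangle>"
    using rform_diff_scale_both[OF ty tx, of "of_int N"] e1 unfolding x'_def
    by (simp add: rform_sym[of y x]) algebra
  moreover have y'y': "\<langle>y', y'\<rangle> = \<langle>x, x\<rangle>"
    using rform_diff_scale_both[OF tx ty, of "of_int M"] e2 unfolding y'_def by simp algebra
  ultimately have x'Rx: "x' \<in> Rx" and y'Rx: "y' \<in> Rx"
    using x y by (simp_all add: mem_Rx)
  have "\<langle>y', x'\<rangle> = \<langle>x, y\<rangle> - of_int N * \<langle>x, x\<rangle> - of_int M * \<langle>y, y\<rangle> + of_int M * of_int N * \<langle>x, y\<rangle>"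
    unfolding x'_def y'_def using tx ty
    by (simp add: rform_diff_scale_left rform_diff_scale_right has_tvec_diff_scale rform_sym[of y x]
        algebra_simps)
  then have "2 * \<langle>y', x'\<rangle> = of_int M * (of_int N * of_int M - 3) * \<langle>y, y\<rangle>"
    and "2 * \<langle>y', x'\<rangle> = of_int N * (of_int N * of_int M - 3) * \<langle>x, x\<rangle>"
    using e1 e2 by algebra+
  then have "2 * \<langle>y', x'\<rangle> = of_int (M * (N * M - 3)) * \<langle>x', x'\<rangle>"
    and "2 * \<langle>x', y'\<rangle> = of_int (N * (N * M - 3)) * \<langle>y', y'\<rangle>"
    unfolding x'x' y'y' rform_sym[of x' y'] by simp_all
  then have "cartan y' x' = of_int (M * (N * M - 3))" "cartan x' y' = of_int (N * (N * M - 3))"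
    using cartan_eqI Rx_nonisotropic[OF x'Rx] Rx_nonisotropic[OF y'Rx] by blast+
  then show ?thesis
    unfolding cartan_pair_def x'_def[symmetric] y'_def[symmetric] using x'Rx y'Rx by blast
qed

text \<open>If \<open>N M < 0\<close>, the reflected pair has Cartan numbers of opposite signs and absolute
  value at least \<open>4\<close>.\<close>

lemma cartan_pair_product_nonneg:
  assumes xy: "cartan_pair x y N M"
  shows "N * M \<ge> 0"
proof (rule ccontr)
  assume "\<not> N * M \<ge> 0"
  then have NM: "N * M < 0" by simp
  have "0 < (N * M - 3) * (N * M - 3)"
    using NM by (simp add: zero_less_mult_iff)
  then have "(N * M) * ((N * M - 3) * (N * M - 3)) < 0"
    using NM mult_neg_pos by blast
  then have "(M * (N * M - 3)) * (N * (N * M - 3)) < 0"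
    by (simp add: algebra_simps)
  then have "\<bar>M * (N * M - 3)\<bar> \<le> 2"
    by (rule cartan_pair_opposite_signs_bound[OF cartan_pair_reflections[OF xy]])
  moreover have "M \<noteq> 0"
    using NM by auto
  then have "\<bar>M\<bar> * \<bar>N * M - 3\<bar> \<ge> 1 * 4"
    using NM by (intro mult_mono) auto
  ultimately show False
    by (simp add: abs_mult)
qed

lemma cartan_pair_not_ge_3_ge_2:
  assumes xy: "cartan_pair x y N M" and N: "N \<ge> 3" and M: "M \<ge> 2"
  shows False
proof -
  have "1 * 2 \<le> (M - 1) * (N - 1)"
    using N M by (intro mult_mono) auto
  then have D: "N + M - N * M < 0"
    by (simp add: algebra_simps)
  have "N \<ge> 1" "N + M - N * M \<noteq> 0"
    using N D by simp_all
  then obtain K where K: "cartan_pair x (\<lambda>z. y z - x z) (N - 2) K" "K * (N + M - N * M) = M * (N - 2)"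
    using cartan_pair_diff_root[OF xy] by blast
  have "M * (N - 2) > 0"
    using N M by (intro mult_pos_pos) simp_all
  then have "K * (N + M - N * M) > 0"
    using K(2) by simp
  then have "K < 0"
    using D by (simp add: zero_less_mult_iff)
  moreover have "(N - 2) * K \<ge> 0"
    using cartan_pair_product_nonneg[OF K(1)] .
  moreover have "N - 2 > 0"
    using N by simp
  ultimately show False
    by (simp add: zero_le_mult_iff)
qed

lemma cartan_pair_not_1_ge_5:
  assumes xy: "cartan_pair x y 1 M" and M: "M \<ge> 5"
  shows False
proof -
  have x: "x \<in> Rx" and y: "y \<in> Rx" and cxy: "cartan x y = of_int M"
    using xy unfolding cartan_pair_def by auto
  have tx: "has_tvec x" and ty: "has_tvec y"
    using x y Rx_has_tvec by auto
  have e1: "2 * \<langle>x, y\<rangle> = \<langle>x, x\<rangle>" and e2: "2 * \<langle>x, y\<rangle> = of_int M * \<langle>y, y\<rangle>"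
    using cartan_pair_rform[OF xy] by auto
  define g where "g = (\<lambda>z. x z - of_int 2 * y z)"
  have gR: "g \<in> R"
    unfolding g_def using root_string[OF y Rx_root[OF x] cxy, of 2] M by simp
  have "\<langle>g, g\<rangle> = \<langle>x, x\<rangle> - 4 * \<langle>x, y\<rangle> + 4 * \<langle>y, y\<rangle>"
    using rform_diff_scale_both[OF tx ty, of 2] by (simp add: g_def)
  then have gg: "\<langle>g, g\<rangle> = (4 - of_int M) * \<langle>y, y\<rangle>"
    using e1 e2 by algebra
  have "\<langle>g, y\<rangle> = \<langle>x, y\<rangle> - 2 * \<langle>y, y\<rangle>"
    using rform_diff_scale_left[OF tx ty ty, of 2] by (simp add: g_def)
  then have gy: "2 * \<langle>g, y\<rangle> = (of_int M - 4) * \<langle>y, y\<rangle>"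
    using e2 by algebra
  have "(4 - of_int M :: complex) \<noteq> 0"
  proof
    assume "(4 - of_int M :: complex) = 0"
    then have "(of_int M :: complex) = of_int 4" by simp
    then show False
      using M by simp
  qed
  then have "\<langle>g, g\<rangle> \<noteq> 0"
    using gg Rx_nonisotropic[OF y] by simp
  then have gRx: "g \<in> Rx"
    using gR mem_Rx by blast
  have "cartan g y = of_int (M - 4)"
    using gy Rx_nonisotropic[OF y] by (intro cartan_eqI) simp_all
  moreover have "2 * \<langle>y, g\<rangle> = - \<langle>g, g\<rangle>"
    using gg gy rform_sym[of y g] by algebra
  then have "cartan y g = of_int (- 1)"
    using \<open>\<langle>g, g\<rangle> \<noteq> 0\<close> by (intro cartan_eqI) simp_all
  ultimately have "cartan_pair y g (M - 4) (- 1)"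
    using y gRx unfolding cartan_pair_def by blast
  then show False
    using cartan_pair_product_nonneg[of y g "M - 4" "- 1"] M by simp
qed

lemma cartan_pair_positive_product_le_4:
  assumes xy: "cartan_pair x y N M" and "N > 0" "M > 0"
  shows "N * M \<le> 4"
proof (rule ccontr)
  assume "\<not> N * M \<le> 4"
  then have NM: "N * M \<ge> 5" by simp
  have "N = 1 \<or> M = 1 \<or> N \<ge> 3 \<and> M \<ge> 2 \<or> N = 2 \<and> M \<ge> 3"
  proof (rule ccontr)
    assume "\<not> ?thesis"
    then have "N = 2 \<and> M = 2"
      using \<open>N > 0\<close> \<open>M > 0\<close> by auto
    then show False
      using NM by simp
  qed
  then consider "N = 1" | "M = 1" | "N \<ge> 3" "M \<ge> 2" | "N = 2" "M \<ge> 3"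
    by blast
  then show False
  proof cases
    case 1
    then show False
      using cartan_pair_not_1_ge_5[of x y M] xy NM by simp
  next
    case 2
    then show False
      using cartan_pair_not_1_ge_5[of y x N] cartan_pair_swap[OF xy] NM by simp
  next
    case 3
    then show False
      by (rule cartan_pair_not_ge_3_ge_2[OF xy])
  next
    case 4
    then show False
      by (intro cartan_pair_not_ge_3_ge_2[OF cartan_pair_swap[OF xy]]) simp_all
  qed
qed

lemma cartan_pair_product_le_4:
  assumes xy: "cartan_pair x y N M"
  shows "N * M \<le> 4"
proof (cases "N * M > 0")
  case True
  then have "N > 0 \<and> M > 0 \<or> N < 0 \<and> M < 0"
    by (simp add: zero_less_mult_iff)
  then show ?thesis
  proof
    assume "N > 0 \<and> M > 0"
    then show ?thesis
      using cartan_pair_positive_product_le_4[OF xy] by blast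
  next
    assume "N < 0 \<and> M < 0"
    then show ?thesis
      using cartan_pair_positive_product_le_4[OF cartan_pair_neg[OF xy]] by simp
  qed
qed simp

lemma isotropic_cartan_lt_3:
  assumes u: "u \<in> R" "\<langle>u, u\<rangle> = 0" and \<gamma>: "\<gamma> \<in> Rx" and N: "cartan u \<gamma> = of_int N"
  shows "N < 3"
proof (rule ccontr)
  assume "\<not> N < 3"
  then have N3: "N \<ge> 3" by simp
  have "(1 - of_int N :: complex) \<noteq> 0"
  proof
    assume "(1 - of_int N :: complex) = 0"
    then have "(of_int N :: complex) = of_int 1" by simp
    then show False
      using N3 by simp
  qed
  then have "\<langle>u, u\<rangle> + (1 - of_int N) * \<langle>\<gamma>, \<gamma>\<rangle> \<noteq> 0"
    using u(2) Rx_nonisotropic[OF \<gamma>] by simp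
  moreover have "N \<ge> 1"
    using N3 by simp
  ultimately obtain K where pair: "cartan_pair \<gamma> (\<lambda>z. u z - \<gamma> z) (N - 2) K"
    and rel: "of_int (N - 2) * \<langle>\<gamma>, \<gamma>\<rangle> = of_int K * ((1 - of_int N) * \<langle>\<gamma>, \<gamma>\<rangle>)"
    using diff_root_cartan_pair[OF \<gamma> u(1) N] u(2) by auto
  have "\<langle>\<gamma>, \<gamma>\<rangle> * (of_int K * (1 - of_int N)) = \<langle>\<gamma>, \<gamma>\<rangle> * (of_int N - 2)"
    using rel[unfolded of_int_diff of_int_numeral] by algebra
  then have "(of_int (K * (1 - N)) :: complex) = of_int (N - 2)"
    using Rx_nonisotropic[OF \<gamma>] by simp
  then have "K * (1 - N) = N - 2"
    by (simp only: of_int_eq_iff)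
  then have "K * (1 - N) > 0"
    using N3 by simp
  then have "K < 0"
    using N3 by (simp add: zero_less_mult_iff)
  moreover have "(N - 2) * K \<ge> 0"
    using cartan_pair_product_nonneg[OF pair] .
  ultimately show False
    using N3 by (simp add: zero_le_mult_iff)
qed

lemma cartan_abs_le_4:
  assumes u: "u \<in> R" and \<gamma>: "\<gamma> \<in> Rx" and N: "cartan u \<gamma> = of_int N"
  shows "\<bar>N\<bar> \<le> 4"
proof (cases "\<langle>u, u\<rangle> = 0")
  case True
  have "cartan u (\<lambda>x. - \<gamma> x) = of_int (- N)"
    using N u \<gamma> by (simp add: cartan_neg_right root_has_tvec Rx_has_tvec)
  then have "- N < 3"
    by (rule isotropic_cartan_lt_3[OF u True neg_Rx[OF \<gamma>]])
  then show ?thesis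
    using isotropic_cartan_lt_3[OF u True \<gamma> N] by linarith
next
  case False
  then have uRx: "u \<in> Rx"
    using u mem_Rx by blast
  obtain M where "cartan \<gamma> u = of_int M"
    using cartan_integer[OF uRx Rx_root[OF \<gamma>]] .
  then have pair: "cartan_pair \<gamma> u N M"
    using \<gamma> uRx N unfolding cartan_pair_def by blast
  show ?thesis
  proof (cases "N = 0")
    case False
    then have "M \<noteq> 0"
      using cartan_pair_zero_iff[OF pair] by simp
    then have "\<bar>N\<bar> * 1 \<le> \<bar>N\<bar> * \<bar>M\<bar>"
      by (intro mult_left_mono) auto
    also have "\<dots> = N * M"
      using cartan_pair_product_nonneg[OF pair] by (simp add: abs_mult[symmetric])
    also have "\<dots> \<le> 4"
      using cartan_pair_product_le_4[OF pair] .
    finally show ?thesis by simp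
  qed simp
qed

lemma rform_root_bound:
  assumes "u \<in> R" "\<gamma> \<in> Rx"
  shows "cmod \<langle>u, \<gamma>\<rangle> \<le> 2 * cmod \<langle>\<gamma>, \<gamma>\<rangle>"
proof -
  obtain N where N: "cartan u \<gamma> = of_int N"
    using cartan_integer[OF assms(2,1)] .
  have "2 * cmod \<langle>u, \<gamma>\<rangle> = \<bar>of_int N\<bar> * cmod \<langle>\<gamma>, \<gamma>\<rangle>"
    using arg_cong[OF cartan_eq[OF Rx_nonisotropic[OF assms(2)] N], of cmod]
    by (simp add: norm_mult)
  also have "\<dots> \<le> 4 * cmod \<langle>\<gamma>, \<gamma>\<rangle>"
    using cartan_abs_le_4[OF assms N] by (intro mult_right_mono) auto
  finally show ?thesis by simp
qed

section \<open>Isotropic sums of nonisotropic roots\<close>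

lemma rform_reflection_left:
  assumes "\<alpha> \<in> Rx" "\<beta> \<in> R" "has_tvec v"
  shows "\<langle>\<lambda>x. \<beta> x - cartan \<beta> \<alpha> * \<alpha> x, v\<rangle> = \<langle>\<beta>, v\<rangle> - 2 * \<langle>\<beta>, \<alpha>\<rangle> / \<langle>\<alpha>, \<alpha>\<rangle> * \<langle>\<alpha>, v\<rangle>"
  using rform_diff_scale_left[of \<beta> \<alpha> v "cartan \<beta> \<alpha>"] assms
  by (simp add: root_has_tvec Rx_has_tvec cartan_def)

text \<open>Two nonisotropic roots \<open>\<gamma>, \<gamma>'\<close> with \<open>\<gamma> + \<gamma>'\<close> isotropic and orthogonal to \<open>\<gamma>\<close>:
  the product of their reflections translates every root along \<open>\<gamma> + \<gamma>'\<close>, and the bound on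
  Cartan numbers forces the translation to be trivial.\<close>

lemma double_reflection:
  assumes \<gamma>: "\<gamma> \<in> Rx" and \<gamma>': "\<gamma>' \<in> Rx"
    and same_length: "\<langle>\<gamma>', \<gamma>'\<rangle> = \<langle>\<gamma>, \<gamma>\<rangle>" and opposite: "\<langle>\<gamma>, \<gamma>'\<rangle> = - \<langle>\<gamma>, \<gamma>\<rangle>"
    and w: "w \<in> R"
  obtains w' where "w' \<in> R" "\<langle>w', \<gamma>\<rangle> = \<langle>w, \<gamma>\<rangle> - 2 * (\<langle>w, \<gamma>\<rangle> + \<langle>w, \<gamma>'\<rangle>)"
    "\<langle>w', \<gamma>'\<rangle> = \<langle>w, \<gamma>'\<rangle> + 2 * (\<langle>w, \<gamma>\<rangle> + \<langle>w, \<gamma>'\<rangle>)"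
proof -
  have a: "\<langle>\<gamma>, \<gamma>\<rangle> \<noteq> 0"
    using Rx_nonisotropic[OF \<gamma>] .
  have t: "has_tvec \<gamma>" "has_tvec \<gamma>'"
    using \<gamma> \<gamma>' Rx_has_tvec by auto
  define w1 where "w1 = (\<lambda>x. w x - cartan w \<gamma>' * \<gamma>' x)"
  define w2 where "w2 = (\<lambda>x. w1 x - cartan w1 \<gamma> * \<gamma> x)"
  have w1: "w1 \<in> R" and w2: "w2 \<in> R"
    using reflection_root[OF \<gamma>' w] reflection_root[OF \<gamma>] unfolding w1_def w2_def by blast+
  have "\<langle>w1, \<gamma>\<rangle> = \<langle>w, \<gamma>\<rangle> + 2 * \<langle>w, \<gamma>'\<rangle>" "\<langle>w1, \<gamma>'\<rangle> = - \<langle>w, \<gamma>'\<rangle>"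
    unfolding w1_def using rform_reflection_left[OF \<gamma>' w] t a same_length opposite
    by (simp_all add: rform_sym[of \<gamma>' \<gamma>])
  moreover have "\<langle>w2, \<gamma>\<rangle> = - \<langle>w1, \<gamma>\<rangle>" "\<langle>w2, \<gamma>'\<rangle> = \<langle>w1, \<gamma>'\<rangle> + 2 * \<langle>w1, \<gamma>\<rangle>"
    unfolding w2_def using rform_reflection_left[OF \<gamma> w1] t a opposite by simp_all
  ultimately show ?thesis
    using that w2 by (simp add: algebra_simps)
qed

lemma translation_orthogonal:
  assumes \<gamma>: "\<gamma> \<in> Rx" and \<gamma>': "\<gamma>' \<in> Rx"
    and same_length: "\<langle>\<gamma>', \<gamma>'\<rangle> = \<langle>\<gamma>, \<gamma>\<rangle>" and opposite: "\<langle>\<gamma>, \<gamma>'\<rangle> = - \<langle>\<gamma>, \<gamma>\<rangle>"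
    and u: "u \<in> R"
  shows "\<langle>u, \<gamma>\<rangle> + \<langle>u, \<gamma>'\<rangle> = 0"
proof -
  define s where "s = \<langle>u, \<gamma>\<rangle> + \<langle>u, \<gamma>'\<rangle>"
  have iterate: "\<exists>w\<in>R. \<langle>w, \<gamma>\<rangle> = \<langle>u, \<gamma>\<rangle> - of_nat k * (2 * s) \<and> \<langle>w, \<gamma>'\<rangle> = \<langle>u, \<gamma>'\<rangle> + of_nat k * (2 * s)"
    for k
  proof (induct k)
    case 0
    then show ?case using u by auto
  next
    case (Suc k)
    then obtain w where w: "w \<in> R" "\<langle>w, \<gamma>\<rangle> = \<langle>u, \<gamma>\<rangle> - of_nat k * (2 * s)"
      "\<langle>w, \<gamma>'\<rangle> = \<langle>u, \<gamma>'\<rangle> + of_nat k * (2 * s)"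
      by blast
    then have ws: "\<langle>w, \<gamma>\<rangle> + \<langle>w, \<gamma>'\<rangle> = s"
      unfolding s_def by simp
    obtain w' where w': "w' \<in> R" "\<langle>w', \<gamma>\<rangle> = \<langle>w, \<gamma>\<rangle> - 2 * (\<langle>w, \<gamma>\<rangle> + \<langle>w, \<gamma>'\<rangle>)"
      "\<langle>w', \<gamma>'\<rangle> = \<langle>w, \<gamma>'\<rangle> + 2 * (\<langle>w, \<gamma>\<rangle> + \<langle>w, \<gamma>'\<rangle>)"
      using double_reflection[OF assms(1-4) w(1)] by blast
    have "\<langle>w', \<gamma>\<rangle> = \<langle>w, \<gamma>\<rangle> - 2 * s" "\<langle>w', \<gamma>'\<rangle> = \<langle>w, \<gamma>'\<rangle> + 2 * s"
      using w'(2,3) by (simp_all only: ws)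
    then have "\<langle>w', \<gamma>\<rangle> = \<langle>u, \<gamma>\<rangle> - of_nat (Suc k) * (2 * s)"
      and "\<langle>w', \<gamma>'\<rangle> = \<langle>u, \<gamma>'\<rangle> + of_nat (Suc k) * (2 * s)"
      unfolding w(2,3) by (simp_all add: algebra_simps)
    then show ?case
      using w'(1) by blast
  qed
  have "norm (\<langle>u, \<gamma>\<rangle> - real k *\<^sub>R (2 * s)) \<le> 2 * cmod \<langle>\<gamma>, \<gamma>\<rangle>" for k
  proof -
    obtain w where "w \<in> R" "\<langle>w, \<gamma>\<rangle> = \<langle>u, \<gamma>\<rangle> - of_nat k * (2 * s)"
      using iterate[of k] by blast
    then show ?thesis
      using rform_root_bound[OF _ \<gamma>, of w] by (simp add: scaleR_conv_of_real)
  qed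
  then have "2 * s = 0"
    by (rule bounded_progression_step_zero)
  then show ?thesis
    unfolding s_def by (simp only: mult_eq_0_iff) simp
qed

lemma isotropic_sum_orthogonal:
  assumes x: "x \<in> Rx" and y: "y \<in> Rx" and xy: "\<langle>x, y\<rangle> \<noteq> 0"
    and isotropic: "\<langle>\<lambda>z. x z + y z, \<lambda>z. x z + y z\<rangle> = 0" and u: "u \<in> R"
  shows "\<langle>u, \<lambda>z. x z + y z\<rangle> = 0"
proof -
  obtain N M where pair: "cartan_pair x y N M"
    using cartan_pair_exists[OF x y] .
  have tx: "has_tvec x" and ty: "has_tvec y"
    using x y Rx_has_tvec by auto
  have e1: "2 * \<langle>x, y\<rangle> = of_int N * \<langle>x, x\<rangle>" and e2: "2 * \<langle>x, y\<rangle> = of_int M * \<langle>y, y\<rangle>"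
    using cartan_pair_rform[OF pair] by auto
  have "\<langle>\<lambda>z. x z + y z, \<lambda>z. x z + y z\<rangle> = \<langle>x, x\<rangle> + \<langle>x, y\<rangle> + (\<langle>y, x\<rangle> + \<langle>y, y\<rangle>)"
    by (simp only: rform_add_left[OF tx ty has_tvec_add[OF tx ty]] rform_add_right[OF tx ty tx]
        rform_add_right[OF tx ty ty])
  then have sum: "\<langle>x, x\<rangle> + 2 * \<langle>x, y\<rangle> + \<langle>y, y\<rangle> = 0"
    using isotropic rform_sym[of y x] by algebra
  then have "2 * \<langle>x, y\<rangle> * ((of_int N + 1) * (of_int M + 1) - 1) = 0"
    using e1 e2 by algebra
  then have "(of_int ((N + 1) * (M + 1)) :: complex) = of_int 1"
    using xy by simp
  then have "(N + 1) * (M + 1) = 1"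
    by (simp only: of_int_eq_iff)
  then have "N = -2"
    using cartan_pair_zero_iff(1)[OF pair] xy by (auto simp: zmult_eq_1_iff)
  then have opposite: "\<langle>x, y\<rangle> = - \<langle>x, x\<rangle>"
    using e1 by simp
  then have "\<langle>y, y\<rangle> = \<langle>x, x\<rangle>"
    using sum by simp
  then have "\<langle>u, x\<rangle> + \<langle>u, y\<rangle> = 0"
    by (rule translation_orthogonal[OF x y _ opposite u])
  then show ?thesis
    using u tx ty by (simp add: rform_add_right root_has_tvec)
qed

lemma sum_root_if_cartan_neg:
  assumes "cartan_pair x y N M" "N < 0"
  shows "(\<lambda>z. x z + y z) \<in> R"
proof -
  have "(\<lambda>z. y z - of_int (- 1) * x z) \<in> R"
    using assms root_string[of x y N "- 1"] unfolding cartan_pair_def by (simp add: Rx_root)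
  then show ?thesis
    by (simp add: add.commute)
qed

lemma rform_ratio_pos:
  assumes x: "x \<in> Rx" and y: "y \<in> Rx" and xy: "\<langle>x, y\<rangle> \<noteq> 0"
  obtains q :: real where "q > 0" "\<langle>y, y\<rangle> = of_real q * \<langle>x, x\<rangle>"
proof -
  obtain N M where pair: "cartan_pair x y N M"
    using cartan_pair_exists[OF x y] .
  have "N \<noteq> 0" "M \<noteq> 0"
    using cartan_pair_zero_iff[OF pair] xy by auto
  then have "N * M > 0"
    using cartan_pair_product_nonneg[OF pair] by (simp add: order_less_le)
  then have "real_of_int N / real_of_int M > 0"
    by (auto simp: zero_less_mult_iff zero_less_divide_iff)
  moreover have "\<langle>y, y\<rangle> = of_real (real_of_int N / real_of_int M) * \<langle>x, x\<rangle>"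
    using cartan_pair_rform[OF pair] \<open>M \<noteq> 0\<close> by (simp add: field_simps)
  ultimately show ?thesis
    using that by blast
qed

end

section \<open>The form on a class of nonisotropic roots\<close>

locale grla_root_class = gr_lie_algebra sc br B H
  for sc :: "complex \<Rightarrow> 'g::ab_group_add \<Rightarrow> 'g" and br B H +
  fixes \<alpha>0 :: "'g \<Rightarrow> complex" and c :: complex
  assumes \<alpha>0: "\<alpha>0 \<in> nonisotropic_roots sc br B H"
    and c_nonzero: "c \<noteq> 0"
    and c_real: "\<forall>u\<in>real_span (root_class sc br B H \<alpha>0).
                   \<forall>v\<in>real_span (root_class sc br B H \<alpha>0). c * rform B H u v \<in> \<real>"
    and c_pos: "\<exists>\<gamma>\<in>root_class sc br B H \<alpha>0. 0 < Re (c * rform B H \<gamma> \<gamma>)"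
begin

abbreviation "C \<equiv> root_class sc br B H \<alpha>0"

definition rform_i :: "('g \<Rightarrow> complex) \<Rightarrow> ('g \<Rightarrow> complex) \<Rightarrow> real"
  where "rform_i u w = Re (c * \<langle>u, w\<rangle>)"

lemma rform_i_sym: "rform_i u w = rform_i w u"
  unfolding rform_i_def by (simp add: rform_sym[of u w])

lemma mem_C: "\<beta> \<in> C \<longleftrightarrow> \<beta> \<in> Rx \<and> (\<lambda>a b. a \<in> Rx \<and> b \<in> Rx \<and> \<langle>a, b\<rangle> \<noteq> 0)\<^sup>*\<^sup>* \<alpha>0 \<beta>"
  by (simp add: root_class_def)

lemma C_Rx: "\<beta> \<in> C \<Longrightarrow> \<beta> \<in> Rx"
  by (simp add: mem_C)

lemma C_has_tvec: "\<beta> \<in> C \<Longrightarrow> has_tvec \<beta>"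
  by (simp add: C_Rx Rx_has_tvec)

lemma C_linked: "\<beta> \<in> C \<Longrightarrow> \<gamma> \<in> Rx \<Longrightarrow> \<langle>\<beta>, \<gamma>\<rangle> \<noteq> 0 \<Longrightarrow> \<gamma> \<in> C"
  unfolding mem_C by (auto intro: rtranclp.rtrancl_into_rtrancl)

lemma C_neg: "\<beta> \<in> C \<Longrightarrow> (\<lambda>x. - \<beta> x) \<in> C"
  using C_linked[of \<beta> "\<lambda>x. - \<beta> x"]
  by (simp add: C_Rx neg_Rx rform_neg_right C_has_tvec Rx_nonisotropic)

lemma C_in_real_span: "\<beta> \<in> C \<Longrightarrow> \<beta> \<in> real_span C"
  unfolding real_span_def by (intro CollectI exI[of _ "{\<beta>}"] exI[of _ "\<lambda>_. 1"]) simp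

lemma c_rform_real:
  assumes "u \<in> real_span C" "w \<in> real_span C"
  shows "c * \<langle>u, w\<rangle> = of_real (rform_i u w)"
  using c_real assms unfolding rform_i_def by (metis Reals_cases Re_complex_of_real)

lemma C_rform_ratio:
  assumes "\<beta> \<in> C"
  obtains q :: real where "q > 0" "\<langle>\<beta>, \<beta>\<rangle> = of_real q * \<langle>\<alpha>0, \<alpha>0\<rangle>"
proof -
  have "(\<lambda>a b. a \<in> Rx \<and> b \<in> Rx \<and> \<langle>a, b\<rangle> \<noteq> 0)\<^sup>*\<^sup>* \<alpha>0 \<beta>"
    using assms mem_C by blast
  then have "\<exists>q>0. \<langle>\<beta>, \<beta>\<rangle> = of_real q * \<langle>\<alpha>0, \<alpha>0\<rangle>"
  proof (induct rule: rtranclp_induct)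
    case base
    show ?case by (intro exI[of _ 1]) simp
  next
    case (step y z)
    obtain q where "q > 0" "\<langle>y, y\<rangle> = of_real q * \<langle>\<alpha>0, \<alpha>0\<rangle>"
      using step(3) by blast
    moreover obtain q' where "q' > 0" "\<langle>z, z\<rangle> = of_real q' * \<langle>y, y\<rangle>"
      using rform_ratio_pos step(2) by blast
    ultimately show ?case
      by (intro exI[of _ "q' * q"]) simp
  qed
  then show ?thesis
    using that by blast
qed

lemma C_rform_i_pos:
  assumes "\<beta> \<in> C"
  shows "rform_i \<beta> \<beta> > 0"
proof -
  have \<alpha>0C: "\<alpha>0 \<in> C"
    using \<alpha>0 by (simp add: mem_C)
  obtain \<gamma> where \<gamma>: "\<gamma> \<in> C" "0 < Re (c * \<langle>\<gamma>, \<gamma>\<rangle>)"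
    using c_pos by blast
  obtain q where q: "q > 0" "\<langle>\<gamma>, \<gamma>\<rangle> = of_real q * \<langle>\<alpha>0, \<alpha>0\<rangle>"
    using C_rform_ratio[OF \<gamma>(1)] .
  obtain q' where q': "q' > 0" "\<langle>\<beta>, \<beta>\<rangle> = of_real q' * \<langle>\<alpha>0, \<alpha>0\<rangle>"
    using C_rform_ratio[OF assms] .
  have "c * \<langle>\<alpha>0, \<alpha>0\<rangle> = of_real (rform_i \<alpha>0 \<alpha>0)"
    using c_rform_real C_in_real_span[OF \<alpha>0C] by blast
  then have "0 < q * rform_i \<alpha>0 \<alpha>0" and "rform_i \<beta> \<beta> = q' * rform_i \<alpha>0 \<alpha>0"
    using \<gamma>(2) q(2) q'(2) unfolding rform_i_def by (simp_all add: algebra_simps)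
  then show ?thesis
    using q(1) q'(1) by (simp add: zero_less_mult_iff)
qed

lemma c_rform_C:
  "\<beta> \<in> C \<Longrightarrow> \<beta>' \<in> C \<Longrightarrow> c * \<langle>\<beta>, \<beta>'\<rangle> = of_real (rform_i \<beta> \<beta>')"
  using c_rform_real C_in_real_span by blast

lemma rform_i_add_left:
  "has_tvec u \<Longrightarrow> has_tvec v \<Longrightarrow> has_tvec w \<Longrightarrow> rform_i (\<lambda>x. u x + v x) w = rform_i u w + rform_i v w"
  unfolding rform_i_def by (simp add: rform_add_left distrib_left)

lemma rform_i_msum:
  assumes "set_mset M \<subseteq> C"
  shows "rform_i (msum M) (msum M) = (\<Sum>x\<in>#M. \<Sum>y\<in>#M. rform_i x y)"
proof -
  have tvec: "\<forall>u\<in>#M. has_tvec u"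
    using assms C_has_tvec by blast
  have "rform_i (msum N) w = (\<Sum>x\<in>#N. rform_i x w)" if "set_mset N \<subseteq> C" "has_tvec w" for N w
    using that
  proof (induct N)
    case empty
    have "has_tvec (\<lambda>_. 0)"
      using has_tvec_msum[of "{#}"] by (simp add: msum_def)
    then show ?case
      using empty by (simp add: rform_i_def msum_def rform_eval)
  next
    case (add x N)
    then have "has_tvec x" "has_tvec (msum N)"
      using C_has_tvec has_tvec_msum by auto
    then show ?case
      using add by (simp add: msum_add_mset rform_i_add_left)
  qed
  moreover have "rform_i x (msum M) = (\<Sum>y\<in>#M. rform_i x y)" if "x \<in># M" for x
  proof -
    have "rform_i (msum M) x = (\<Sum>y\<in>#M. rform_i y x)"
      using calculation[OF assms, of x] C_has_tvec assms that by (simp add: subset_iff)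
    then show ?thesis
      by (simp only: rform_i_sym[of _ x])
  qed
  ultimately show ?thesis
    using assms tvec has_tvec_msum by (auto intro!: arg_cong[where f = sum_mset] image_mset_cong)
qed

lemma c_rform_root_bound:
  assumes "\<delta> \<in> R" "x \<in> C"
  shows "cmod (c * \<langle>\<delta>, x\<rangle>) \<le> 2 * rform_i x x"
proof -
  have "cmod (c * \<langle>\<delta>, x\<rangle>) \<le> cmod c * (2 * cmod \<langle>x, x\<rangle>)"
    using rform_root_bound[OF assms(1) C_Rx[OF assms(2)]] by (simp add: norm_mult mult_left_mono)
  also have "\<dots> = 2 * cmod (c * \<langle>x, x\<rangle>)"
    by (simp add: norm_mult)
  also have "\<dots> = 2 * rform_i x x"
    using c_rform_C[OF assms(2,2)] C_rform_i_pos[OF assms(2)] by simp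
  finally show ?thesis .
qed

lemma msum_rform_i_bound_if_acute:
  assumes MC: "set_mset M \<subseteq> C"
    and acute: "\<And>x y M'. M = add_mset x (add_mset y M') \<Longrightarrow> 0 \<le> rform_i x y"
  shows "0 \<le> rform_i (msum M) (msum M) \<and> (\<forall>\<delta>\<in>R. cmod (c * \<langle>\<delta>, msum M\<rangle>) \<le> 2 * rform_i (msum M) (msum M))"
proof -
  have row: "rform_i x x \<le> (\<Sum>y\<in>#M. rform_i x y)" if x: "x \<in># M" for x
  proof -
    have "0 \<le> rform_i x y" if "y \<in># M - {#x#}" for y
    proof (rule acute)
      show "M = add_mset x (add_mset y (M - {#x#} - {#y#}))"
        by (simp only: insert_DiffM[OF that] insert_DiffM[OF x])
    qed
    then have "(\<Sum>y\<in>#M - {#x#}. 0) \<le> (\<Sum>y\<in>#M - {#x#}. rform_i x y)"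
      by (rule sum_mset_mono)
    then have "0 \<le> (\<Sum>y\<in>#M - {#x#}. rform_i x y)"
      by simp
    moreover have "(\<Sum>y\<in>#M. rform_i x y) = rform_i x x + (\<Sum>y\<in>#M - {#x#}. rform_i x y)"
      using x by (metis insert_DiffM sum_mset.insert)
    ultimately show ?thesis by simp
  qed
  have diag: "(\<Sum>x\<in>#M. rform_i x x) \<le> rform_i (msum M) (msum M)"
    unfolding rform_i_msum[OF MC] using row by (rule sum_mset_mono)
  have "(\<Sum>x\<in>#M. 0) \<le> (\<Sum>x\<in>#M. rform_i x x)"
    using MC C_rform_i_pos by (intro sum_mset_mono) (auto simp: less_imp_le)
  then have "0 \<le> (\<Sum>x\<in>#M. rform_i x x)"
    by simp
  moreover have "cmod (c * \<langle>\<delta>, msum M\<rangle>) \<le> 2 * (\<Sum>x\<in>#M. rform_i x x)" if "\<delta> \<in> R" for \<delta>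
  proof -
    have "c * \<langle>\<delta>, msum M\<rangle> = (\<Sum>x\<in>#M. c * \<langle>\<delta>, x\<rangle>)"
      using MC that by (simp add: rform_msum_right C_has_tvec root_has_tvec subset_iff sum_mset_distrib_left)
    then have "cmod (c * \<langle>\<delta>, msum M\<rangle>) \<le> (\<Sum>x\<in>#M. cmod (c * \<langle>\<delta>, x\<rangle>))"
      using norm_sum_mset_le by metis
    also have "\<dots> \<le> (\<Sum>x\<in>#M. 2 * rform_i x x)"
      using MC c_rform_root_bound[OF that] by (intro sum_mset_mono) auto
    finally show ?thesis
      by (simp add: sum_mset_distrib_left)
  qed
  ultimately show ?thesis
    using diag by force
qed

lemma obtuse_pair_sum:
  assumes x: "x \<in> C" and y: "y \<in> C" and obtuse: "rform_i x y < 0"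
  shows "(\<lambda>z. x z + y z) \<in> C \<or> (\<forall>u\<in>R. \<langle>u, \<lambda>z. x z + y z\<rangle> = 0)"
proof -
  obtain N M where pair: "cartan_pair x y N M"
    using cartan_pair_exists[OF C_Rx[OF x] C_Rx[OF y]] .
  have "2 * (c * \<langle>x, y\<rangle>) = of_int N * (c * \<langle>x, x\<rangle>)"
    using cartan_pair_rform(1)[OF pair] by (metis mult.left_commute)
  then have "of_real (2 * rform_i x y) = (of_real (of_int N * rform_i x x) :: complex)"
    using c_rform_C[OF x y] c_rform_C[OF x x] by simp
  then have "2 * rform_i x y = of_int N * rform_i x x"
    by (simp only: of_real_eq_iff)
  then have "real_of_int N * rform_i x x < 0"
    using obtuse by linarith
  then have "N < 0"
    using C_rform_i_pos[OF x] by (simp add: mult_less_0_iff)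
  define z where "z = (\<lambda>t. x t + y t)"
  have zR: "z \<in> R"
    unfolding z_def by (rule sum_root_if_cartan_neg[OF pair \<open>N < 0\<close>])
  have "\<langle>x, y\<rangle> \<noteq> 0"
    using obtuse unfolding rform_i_def by auto
  show ?thesis
  proof (cases "\<langle>z, z\<rangle> = 0")
    case True
    then show ?thesis
      using isotropic_sum_orthogonal[OF C_Rx[OF x] C_Rx[OF y] \<open>\<langle>x, y\<rangle> \<noteq> 0\<close>] by (simp add: z_def)
  next
    case False
    then have zRx: "z \<in> Rx"
      using zR mem_Rx by blast
    have "\<langle>x, z\<rangle> + \<langle>y, z\<rangle> = \<langle>z, z\<rangle>"
      using x y zR by (simp add: z_def rform_add_left C_has_tvec root_has_tvec)
    then have "\<langle>x, z\<rangle> \<noteq> 0 \<or> \<langle>y, z\<rangle> \<noteq> 0"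
      using False by auto
    then have "z \<in> C"
      using C_linked[OF x zRx] C_linked[OF y zRx] by blast
    then show ?thesis
      by (simp add: z_def)
  qed
qed

lemma msum_add_orthogonal:
  assumes M'C: "set_mset M' \<subseteq> C" and tz: "has_tvec z"
    and orth: "\<forall>u\<in>R. \<langle>u, z\<rangle> = 0" and isotropic: "\<langle>z, z\<rangle> = 0"
  shows "rform_i (\<lambda>t. z t + msum M' t) (\<lambda>t. z t + msum M' t) = rform_i (msum M') (msum M')"
    and "\<delta> \<in> R \<Longrightarrow> \<langle>\<delta>, \<lambda>t. z t + msum M' t\<rangle> = \<langle>\<delta>, msum M'\<rangle>"
proof -
  have tM': "has_tvec (msum M')"
    using M'C C_has_tvec by (intro has_tvec_msum) auto
  have "(\<Sum>u\<in>#M'. \<langle>u, z\<rangle>) = (\<Sum>u\<in>#M'. 0)"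
    using orth M'C by (intro arg_cong[where f = sum_mset] image_mset_cong) (auto simp: C_Rx Rx_root)
  then have "\<langle>msum M', z\<rangle> = 0"
    using M'C tz by (simp add: rform_msum_left C_has_tvec subset_iff)
  then show "rform_i (\<lambda>t. z t + msum M' t) (\<lambda>t. z t + msum M' t) = rform_i (msum M') (msum M')"
    unfolding rform_i_def using tz tM' isotropic
    by (simp add: rform_add_left rform_add_right has_tvec_add rform_sym[of z "msum M'"])
  show "\<delta> \<in> R \<Longrightarrow> \<langle>\<delta>, \<lambda>t. z t + msum M' t\<rangle> = \<langle>\<delta>, msum M'\<rangle>"
    using orth tz tM' by (simp add: rform_add_right root_has_tvec)
qed

text \<open>Replacing an obtuse pair \<open>x, y\<close> by \<open>x + y\<close> (or dropping it when \<open>x + y\<close> is orthogonal to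
  all roots) leaves the sum essentially unchanged and shortens the multiset, until all pairs are
  acute.\<close>

lemma msum_rform_i_bound:
  assumes "set_mset M \<subseteq> C"
  shows "0 \<le> rform_i (msum M) (msum M) \<and> (\<forall>\<delta>\<in>R. cmod (c * \<langle>\<delta>, msum M\<rangle>) \<le> 2 * rform_i (msum M) (msum M))"
  using assms
proof (induct "size M" arbitrary: M rule: less_induct)
  case less
  show ?case
  proof (cases "\<exists>x y M'. M = add_mset x (add_mset y M') \<and> rform_i x y < 0")
    case False
    then show ?thesis
      using msum_rform_i_bound_if_acute[OF less.prems] by (meson not_less)
  next
    case True
    then obtain x y M' where M: "M = add_mset x (add_mset y M')" and obtuse: "rform_i x y < 0"
      by blast
    have xC: "x \<in> C" and yC: "y \<in> C" and M'C: "set_mset M' \<subseteq> C"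
      using less.prems M by auto
    define z where "z = (\<lambda>t. x t + y t)"
    have msum_M: "msum M = (\<lambda>t. z t + msum M' t)"
      by (simp add: M z_def msum_add_mset add.assoc)
    consider "z \<in> C" | "\<forall>u\<in>R. \<langle>u, z\<rangle> = 0"
      using obtuse_pair_sum[OF xC yC obtuse] unfolding z_def by blast
    then show ?thesis
    proof cases
      case 1
      have "msum (add_mset z M') = msum M"
        by (simp add: msum_M msum_add_mset)
      moreover have "size (add_mset z M') < size M"
        by (simp add: M)
      ultimately show ?thesis
        using less.hyps[of "add_mset z M'"] 1 M'C by auto
    next
      case 2
      have "has_tvec z"
        using xC yC by (simp add: z_def has_tvec_add C_has_tvec)
      moreover have "\<langle>z, z\<rangle> = 0"
        using 2 xC yC by (simp add: z_def rform_add_left C_has_tvec has_tvec_add C_Rx Rx_root)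
      ultimately have "rform_i (msum M) (msum M) = rform_i (msum M') (msum M')"
        and "\<forall>\<delta>\<in>R. \<langle>\<delta>, msum M\<rangle> = \<langle>\<delta>, msum M'\<rangle>"
        using msum_add_orthogonal[OF M'C _ 2] unfolding msum_M by blast+
      moreover have "size M' < size M"
        using M by simp
      ultimately show ?thesis
        using less.hyps[of M'] M'C by auto
    qed
  qed
qed

lemma has_tvec_rcomb: "finite F \<Longrightarrow> F \<subseteq> C \<Longrightarrow> has_tvec (rcomb F r)"
  unfolding rcomb_def using C_has_tvec by (intro has_tvec_sum) auto

lemma c_rform_rcomb:
  assumes F: "finite F" "F \<subseteq> C"
  shows "c * \<langle>rcomb F u, rcomb F w\<rangle> = of_real (gram_form F rform_i u w)"
proof -
  have tvec: "\<forall>\<beta>\<in>F. has_tvec \<beta>"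
    using F C_has_tvec by blast
  have "\<langle>rcomb F u, rcomb F w\<rangle> = (\<Sum>\<beta>\<in>F. of_real (u \<beta>) * \<langle>\<beta>, rcomb F w\<rangle>)"
    unfolding rcomb_def by (rule rform_sum_left[OF F(1) tvec has_tvec_rcomb[OF F, unfolded rcomb_def]])
  also have "\<dots> = (\<Sum>\<beta>\<in>F. of_real (u \<beta>) * (\<Sum>\<beta>'\<in>F. of_real (w \<beta>') * \<langle>\<beta>, \<beta>'\<rangle>))"
    unfolding rcomb_def using rform_sum_right[OF F(1) tvec] tvec by simp
  finally have "c * \<langle>rcomb F u, rcomb F w\<rangle>
      = (\<Sum>\<beta>\<in>F. \<Sum>\<beta>'\<in>F. of_real (u \<beta> * w \<beta>') * (c * \<langle>\<beta>, \<beta>'\<rangle>))"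
    by (simp add: sum_distrib_left mult_ac)
  also have "\<dots> = of_real (gram_form F rform_i u w)"
    unfolding gram_form_def using F c_rform_C by (simp add: subset_iff)
  finally show ?thesis .
qed

lemma c_rform_root_rcomb:
  assumes F: "finite F" "F \<subseteq> C" and \<delta>: "\<delta> \<in> R"
  shows "c * \<langle>\<delta>, rcomb F r\<rangle> = (\<Sum>\<beta>\<in>F. r \<beta> *\<^sub>R (c * \<langle>\<delta>, \<beta>\<rangle>))"
proof -
  have "\<langle>\<delta>, rcomb F r\<rangle> = (\<Sum>\<beta>\<in>F. of_real (r \<beta>) * \<langle>\<delta>, \<beta>\<rangle>)"
    unfolding rcomb_def using F \<delta> C_has_tvec by (intro rform_sum_right) (auto simp: root_has_tvec)
  then show ?thesis
    by (simp add: sum_distrib_left scaleR_conv_of_real mult_ac)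
qed

lemma gram_form_int_bounds:
  assumes F: "finite F" "F \<subseteq> C"
  shows "0 \<le> gram_form F rform_i (\<lambda>\<beta>. of_int (k \<beta>)) (\<lambda>\<beta>. of_int (k \<beta>))"
    and "\<delta> \<in> R \<Longrightarrow> norm (\<Sum>\<beta>\<in>F. real_of_int (k \<beta>) *\<^sub>R (c * \<langle>\<delta>, \<beta>\<rangle>))
          \<le> 2 * gram_form F rform_i (\<lambda>\<beta>. of_int (k \<beta>)) (\<lambda>\<beta>. of_int (k \<beta>))"
proof -
  define v where "v = rcomb F (\<lambda>\<beta>. of_int (k \<beta>))"
  have "set_mset (signed_mset F k) \<subseteq> C"
  proof
    fix u assume "u \<in># signed_mset F k"
    then have "u \<in> F \<union> (\<lambda>\<beta> x. - \<beta> x) ` F"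
      using set_signed_mset[OF F(1), of k] by blast
    then show "u \<in> C"
      using F(2) C_neg by blast
  qed
  moreover have "msum (signed_mset F k) = v"
    unfolding v_def by (rule msum_signed_mset[OF F(1)])
  ultimately have bound: "0 \<le> rform_i v v" "\<forall>\<delta>\<in>R. cmod (c * \<langle>\<delta>, v\<rangle>) \<le> 2 * rform_i v v"
    using msum_rform_i_bound by metis+
  have gram: "rform_i v v = gram_form F rform_i (\<lambda>\<beta>. of_int (k \<beta>)) (\<lambda>\<beta>. of_int (k \<beta>))"
    using c_rform_rcomb[OF F] unfolding v_def rform_i_def by simp
  show "0 \<le> gram_form F rform_i (\<lambda>\<beta>. of_int (k \<beta>)) (\<lambda>\<beta>. of_int (k \<beta>))"
    using bound(1) gram by simp
  assume "\<delta> \<in> R"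
  then have "cmod (c * \<langle>\<delta>, v\<rangle>) \<le> 2 * rform_i v v"
    using bound(2) by blast
  moreover have "c * \<langle>\<delta>, v\<rangle> = (\<Sum>\<beta>\<in>F. real_of_int (k \<beta>) *\<^sub>R (c * \<langle>\<delta>, \<beta>\<rangle>))"
    unfolding v_def by (rule c_rform_root_rcomb[OF F \<open>\<delta> \<in> R\<close>])
  ultimately show "norm (\<Sum>\<beta>\<in>F. real_of_int (k \<beta>) *\<^sub>R (c * \<langle>\<delta>, \<beta>\<rangle>))
      \<le> 2 * gram_form F rform_i (\<lambda>\<beta>. of_int (k \<beta>)) (\<lambda>\<beta>. of_int (k \<beta>))"
    by (simp only: gram)
qed

lemma gram_form_rform_i_nonneg:
  assumes "finite F" "F \<subseteq> C"
  shows "0 \<le> gram_form F rform_i r r"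
  by (rule gram_form_nonneg_if_nonneg_on_integers[OF assms(1) gram_form_int_bounds(1)[OF assms]])

lemma real_span_nonneg:
  assumes "v \<in> real_span C"
  shows "0 \<le> Re (c * \<langle>v, v\<rangle>)"
proof -
  obtain F r where F: "finite F" "F \<subseteq> C" "v = rcomb F r"
    using assms unfolding mem_real_span by blast
  have "c * \<langle>v, v\<rangle> = of_real (gram_form F rform_i r r)"
    unfolding F(3) by (rule c_rform_rcomb[OF F(1,2)])
  then show ?thesis
    using gram_form_rform_i_nonneg[OF F(1,2), of r] by simp
qed

lemma real_span_null_orthogonal:
  assumes v: "v \<in> real_span C" and null: "Re (c * \<langle>v, v\<rangle>) = 0" and \<delta>: "\<delta> \<in> R"
  shows "\<langle>\<delta>, v\<rangle> = 0"
proof -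
  obtain F r where F: "finite F" "F \<subseteq> C" "v = rcomb F r"
    using v unfolding mem_real_span by blast
  have "c * \<langle>v, v\<rangle> = of_real (gram_form F rform_i r r)"
    unfolding F(3) by (rule c_rform_rcomb[OF F(1,2)])
  then have "gram_form F rform_i r r = 0"
    using null by simp
  then have radical: "gram_form F rform_i r w = 0" for w
    by (rule gram_form_radical[OF gram_form_rform_i_nonneg[OF F(1,2)] rform_i_sym])
  moreover have "gram_form F rform_i w r = 0" for w
  proof -
    have "gram_form F rform_i w r = gram_form F rform_i r w"
      by (rule gram_form_sym) (rule rform_i_sym)
    then show ?thesis
      using radical[of w] by simp
  qed
  ultimately have "(\<Sum>\<beta>\<in>F. r \<beta> *\<^sub>R (c * \<langle>\<delta>, \<beta>\<rangle>)) = 0"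
    by (rule gram_radical_in_kernel[OF F(1) gram_form_int_bounds(2)[OF F(1,2) \<delta>]])
  then have "c * \<langle>\<delta>, v\<rangle> = 0"
    unfolding F(3) c_rform_root_rcomb[OF F(1,2) \<delta>] .
  then show ?thesis
    using c_nonzero by simp
qed

lemma real_span_null_in_radical:
  assumes v: "v \<in> real_span C" and null: "Re (c * \<langle>v, v\<rangle>) = 0"
  shows "v \<in> radical sc br B H"
proof -
  obtain F r where F: "finite F" "F \<subseteq> C" "v = rcomb F r"
    using v unfolding mem_real_span by blast
  have "F \<subseteq> R"
    using F(2) C_Rx Rx_root by blast
  then have vR: "v \<in> real_span R"
    unfolding mem_real_span using F(1,3) by blast
  have tv: "has_tvec v"
    using has_tvec_rcomb[OF F(1,2)] F(3) by simp
  have orth: "\<langle>v, w\<rangle> = 0" if w: "w \<in> real_span R" for w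
  proof -
    obtain F' d where F': "finite F'" "F' \<subseteq> R" "w = rcomb F' d"
      using w unfolding mem_real_span by blast
    have "\<forall>\<beta>\<in>F'. has_tvec \<beta>"
      using F'(2) root_has_tvec by blast
    then have "\<langle>v, w\<rangle> = (\<Sum>\<beta>\<in>F'. of_real (d \<beta>) * \<langle>v, \<beta>\<rangle>)"
      unfolding F'(3) rcomb_def by (rule rform_sum_right[OF F'(1) _ tv])
    also have "\<dots> = 0"
    proof (intro sum.neutral ballI)
      fix \<beta> assume "\<beta> \<in> F'"
      then have "\<langle>\<beta>, v\<rangle> = 0"
        using F'(2) real_span_null_orthogonal[OF v null] by blast
      then show "of_real (d \<beta>) * \<langle>v, \<beta>\<rangle> = 0"
        by (simp add: rform_sym[of v \<beta>])
    qed
    finally show ?thesis .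
  qed
  show ?thesis
    unfolding radical_def using vR orth by blast
qed

end

theorem lemma1p8:
  fixes sc :: "complex \<Rightarrow> 'g::ab_group_add \<Rightarrow> 'g"
    and br :: "'g \<Rightarrow> 'g \<Rightarrow> 'g"
    and B :: "'g \<Rightarrow> 'g \<Rightarrow> complex"
    and H :: "'g set"
    and \<alpha>0 :: "'g \<Rightarrow> complex"
    and c :: complex
  assumes grla: "grla sc br B H"
    and \<alpha>0: "\<alpha>0 \<in> nonisotropic_roots sc br B H"
    and c_nz: "c \<noteq> 0"
    and c_real: "\<forall>u\<in>real_span (root_class sc br B H \<alpha>0).
                   \<forall>v\<in>real_span (root_class sc br B H \<alpha>0). c * rform B H u v \<in> \<real>"
    and c_pos: "\<exists>\<gamma>\<in>root_class sc br B H \<alpha>0. 0 < Re (c * rform B H \<gamma> \<gamma>)"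
  shows "(\<forall>v\<in>real_span (root_class sc br B H \<alpha>0).
            v \<notin> radical sc br B H \<longrightarrow> 0 < Re (c * rform B H v v))
       \<and> (\<forall>v\<in>real_span (root_class sc br B H \<alpha>0). 0 \<le> Re (c * rform B H v v))"
proof -
  interpret grla_root_class sc br B H \<alpha>0 c
    by unfold_locales (fact grla \<alpha>0 c_nz c_real c_pos)+
  show ?thesis
    using real_span_nonneg real_span_null_in_radical by (auto simp: order_le_less)
qed

end
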